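(* Let $a\in(0,1)$ and $F\in\Gamma_0^s(\mathbb{R}_+)$, and suppose $\hat F^a$ is a metric on $[0,+\infty)$. Then the sequence $\{T_a^{(n)}(F)\}_n$ is pointwise increasing and converges pointwise to a function $F^\infty$ which is a fixed point of $T_a$. Moreover, if $(\widehat{F^\infty})^a$ is a metric on $[0,+\infty)$, then $F^\infty(s)=c|s^a-1|^{1/a}$ for some $c\in(0,+\infty)$.
   Context: $\Gamma_0(\mathbb{R}_+)$ is the set of functions $F:[0,\infty)\to[0,\infty]$ that are convex, lower semicontinuous, with $F(1)=0$. For $F\in\Gamma_0(\mathbb{R}_+)$: $\mathrm{rec}(F)(r)=\lim_{\alpha\to\infty}F(1+\alpha r)/\alpha$, $F'_\infty:=\mathrm{rec}(F)(1)$; the perspective function is $\hat F(r,t)=tF(r/t)$ for $t>0$, $\hat F(r,0)=\mathrm{rec}(F)(r)$; the reverse entropy is $R(s)=sF(1/s)$ for $s>0$, $R(0)=F'_\infty$. $\Gamma_0^s(\mathbb{R}_+)$ is the set of $F\in\Gamma_0(\mathbb{R}_+)$ with $F=R$; for such $F$, $\hat F$ is symmetric and $\hat F(1,t)=F(t)$. The marginal perspective function $H_F$ is the lower semicontinuous envelope of $\tilde H_F(r_1,r_2)=\inf_{\theta>0}[\hat F(\theta,r_1)+\hat F(\theta,r_2)]$. For $a\in(0,1]$, $T_a:\Gamma_0(\mathbb{R}_+)\to\Gamma_0^s(\mathbb{R}_+)$ is $T_a(F)(s)=2^{1/a-1}H_F(1,s)$, and $T_a^{(n)}$ is its $n$-th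 iterate. A metric on $[0,\infty)$ is a finite-valued function $D:[0,\infty)^2\to[0,\infty)$ with $D(x,y)=0\iff x=y$, symmetric, satisfying the triangle inequality. *)

theory Defs
  imports "HOL-Analysis.Analysis"
begin

text \<open>Functions F : [0,\<infinity>) \<rightarrow> [0,\<infinity>] are modelled as real \<Rightarrow> ereal;
  only their values on [0,\<infinity>) matter.\<close>

definition convex_nn :: "(real \<Rightarrow> ereal) \<Rightarrow> bool" where
  "convex_nn F \<longleftrightarrow> (\<forall>x\<ge>0. \<forall>y\<ge>0. \<forall>t::real. 0 \<le> t \<and> t \<le> 1 \<longrightarrow>
      F (t * x + (1 - t) * y) \<le> ereal t * F x + ereal (1 - t) * F y)"

definition lsc_within :: "'a::topological_space set \<Rightarrow> ('a \<Rightarrow> ereal) \<Rightarrow> bool" where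
  "lsc_within D f \<longleftrightarrow> (\<forall>x\<in>D. f x \<le> Liminf (at x within D) f)"

definition Gamma0 :: "(real \<Rightarrow> ereal) \<Rightarrow> bool" where
  "Gamma0 F \<longleftrightarrow> (\<forall>x\<ge>0. 0 \<le> F x) \<and> convex_nn F \<and> lsc_within {0..} F \<and> F 1 = 0"

definition recF :: "(real \<Rightarrow> ereal) \<Rightarrow> real \<Rightarrow> ereal" where
  "recF F r = Lim at_top (\<lambda>\<alpha>::real. F (1 + \<alpha> * r) / ereal \<alpha>)"

definition Finf_slope :: "(real \<Rightarrow> ereal) \<Rightarrow> ereal" where
  "Finf_slope F = recF F 1"

definition persp :: "(real \<Rightarrow> ereal) \<Rightarrow> real \<Rightarrow> real \<Rightarrow> ereal" where
  "persp F r t = (if t > 0 then ereal t * F (r / t) else recF F r)"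

definition reverse_entropy :: "(real \<Rightarrow> ereal) \<Rightarrow> real \<Rightarrow> ereal" where
  "reverse_entropy F s = (if s > 0 then ereal s * F (1 / s) else Finf_slope F)"

definition Gamma0s :: "(real \<Rightarrow> ereal) \<Rightarrow> bool" where
  "Gamma0s F \<longleftrightarrow> Gamma0 F \<and> (\<forall>s\<ge>0. F s = reverse_entropy F s)"

definition Htilde :: "(real \<Rightarrow> ereal) \<Rightarrow> real \<times> real \<Rightarrow> ereal" where
  "Htilde F p = (INF \<theta>\<in>{0<..}. persp F \<theta> (fst p) + persp F \<theta> (snd p))"

definition lsc_envelope :: "'a::topological_space set \<Rightarrow> ('a \<Rightarrow> ereal) \<Rightarrow> 'a \<Rightarrow> ereal" where
  "lsc_envelope D g p = (SUP h\<in>{h. lsc_within D h \<and> (\<forall>q\<in>D. h q \<le> g q)}. h p)"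

definition HF :: "(real \<Rightarrow> ereal) \<Rightarrow> real \<Rightarrow> real \<Rightarrow> ereal" where
  "HF F r1 r2 = lsc_envelope ({0..} \<times> {0..}) (Htilde F) (r1, r2)"

definition Ta :: "real \<Rightarrow> (real \<Rightarrow> ereal) \<Rightarrow> real \<Rightarrow> ereal" where
  "Ta a F s = ereal (2 powr (1 / a - 1)) * HF F 1 s"

definition metric_nn :: "(real \<Rightarrow> real \<Rightarrow> real) \<Rightarrow> bool" where
  "metric_nn D \<longleftrightarrow> (\<forall>x\<ge>0. \<forall>y\<ge>0. \<forall>z\<ge>0.
      0 \<le> D x y \<and> (D x y = 0 \<longleftrightarrow> x = y) \<and> D x y = D y x \<and> D x z \<le> D x y + D y z)"

definition persp_pow_metric :: "real \<Rightarrow> (real \<Rightarrow> ereal) \<Rightarrow> bool" where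
  "persp_pow_metric a F \<longleftrightarrow> (\<forall>x\<ge>0. \<forall>y\<ge>0. persp F x y \<noteq> \<infinity>) \<and>
      metric_nn (\<lambda>x y. real_of_ereal (persp F x y) powr a)"

end

theory Submission
  imports Defs
begin

text \<open>Write \<open>d = persp F ^ a\<close>. The triangle inequality \<open>d(1,s) \<le> d(1,\<theta>) + d(\<theta>,s)\<close> and concavity
  of \<open>u \<mapsto> u^a\<close> give \<open>F \<le> T_a F\<close>; as \<open>T_a\<close> is monotone the iterates increase, and they all
  remain finite, continuous symmetric entropies. The infimum over \<open>\<theta>\<close> inside \<open>T_a\<close> commutes with
  the increasing limit (linear growth at infinity and a Dini argument on a compact
  \<open>\<theta>\<close>-interval), so the supremum \<open>F\<^sup>\<infinity>\<close> is a fixed point.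
  If \<open>d = persp F\<^sup>\<infinity> ^ a\<close> is a metric, then at a fixed point the infimum is attained at a \<open>\<theta>\<close>
  for which the triangle inequality through \<open>\<theta>\<close> is an equality with both parts comparable to the
  whole. Iterating this bisection gives \<open>d(x,y) = d(0,y) - d(0,x)\<close>, and
  \<open>d(0,x) = F\<^sup>\<infinity>(0)^a x^a\<close> yields \<open>F\<^sup>\<infinity>(s) = F\<^sup>\<infinity>(0) |s^a - 1|^(1/a)\<close>.\<close>

definition sym_entropy :: "(real \<Rightarrow> real) \<Rightarrow> bool" where
  "sym_entropy g \<longleftrightarrow> (\<forall>x\<ge>0. 0 \<le> g x) \<and> g 1 = 0 \<and> convex_on {0..} g \<and>
     continuous_on {0..} g \<and> (\<forall>s>0. g s = s * g (1/s))"

lemma sym_entropy_nonneg: "sym_entropy g \<Longrightarrow> 0 \<le> x \<Longrightarrow> 0 \<le> g x"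
  unfolding sym_entropy_def by blast

lemma sym_entropy_one: "sym_entropy g \<Longrightarrow> g 1 = 0"
  unfolding sym_entropy_def by blast

lemma sym_entropy_convex: "sym_entropy g \<Longrightarrow> convex_on {0..} g"
  unfolding sym_entropy_def by blast

lemma sym_entropy_continuous: "sym_entropy g \<Longrightarrow> continuous_on {0..} g"
  unfolding sym_entropy_def by blast

lemma sym_entropy_symmetric: "sym_entropy g \<Longrightarrow> 0 < s \<Longrightarrow> g s = s * g (1/s)"
  unfolding sym_entropy_def by blast

lemma convex_on_nonnegD:
  fixes g :: "real \<Rightarrow> real"
  assumes "convex_on {0..} g" "0 \<le> x" "0 \<le> y" "0 \<le> t" "t \<le> 1"
  shows "g (t*x + (1-t)*y) \<le> t * g x + (1-t) * g y"
  using assms unfolding convex_on_alt by simp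

lemma sym_entropy_le_chord:
  assumes "sym_entropy g" "0 \<le> u" "u \<le> 1"
  shows "g u \<le> (1-u) * g 0"
proof -
  have "g ((1-u)*0 + (1-(1-u))*1) \<le> (1-u) * g 0 + (1-(1-u)) * g 1"
    using assms by (intro convex_on_nonnegD sym_entropy_convex) auto
  thus ?thesis using sym_entropy_one[OF assms(1)] by simp
qed

lemma sym_entropy_antimono:
  assumes "sym_entropy g" "0 \<le> u" "u \<le> v" "v \<le> 1"
  shows "g v \<le> g u"
proof (cases "u = 1")
  case True thus ?thesis using assms by auto
next
  case False
  define t where "t = (1 - v)/(1 - u)"
  have u1: "1 - u > 0" using assms False by simp
  have t: "0 \<le> t" "t \<le> 1" using assms u1 by (auto simp: t_def divide_le_eq_1)
  have "t * (1 - u) = 1 - v" using u1 unfolding t_def by simp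
  hence "v = t*u + (1-t)*1" by (simp add: algebra_simps)
  moreover have "g (t*u + (1-t)*1) \<le> t * g u + (1-t) * g 1"
    using assms t by (intro convex_on_nonnegD sym_entropy_convex) auto
  ultimately have "g v \<le> t * g u" using sym_entropy_one[OF assms(1)] by simp
  also have "\<dots> \<le> g u"
    using t mult_left_le_one_le[of "g u" t] sym_entropy_nonneg[OF assms(1,2)] by simp
  finally show ?thesis .
qed

lemma sym_entropy_linear_growth:
  assumes "sym_entropy g" "2 \<le> x"
  shows "(x - 1) * g 2 \<le> g x"
proof -
  define t where "t = 1/(x-1)"
  have x1: "x - 1 > 0" using assms by simp
  have t: "0 \<le> t" "t \<le> 1" "t * (x - 1) = 1" using assms x1 by (auto simp: t_def)
  have two: "t*x + (1-t)*1 = 2" using t(3) by (simp add: algebra_simps)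
  have "g (t*x + (1-t)*1) \<le> t * g x + (1-t) * g 1"
    using assms t by (intro convex_on_nonnegD sym_entropy_convex) auto
  hence "g 2 \<le> t * g x" unfolding two using sym_entropy_one[OF assms(1)] by simp
  hence "(x - 1) * g 2 \<le> (x - 1) * (t * g x)" using x1 by simp
  also have "\<dots> = (t * (x - 1)) * g x" by (simp add: algebra_simps)
  finally show ?thesis using t(3) by simp
qed

text \<open>For a symmetric entropy \<open>rec(g)(x) = x * g 0\<close> (see \<open>recF_sym_entropy\<close>), so the
  second branch is the recession function and \<open>persp_real\<close> is the perspective function.\<close>
definition persp_real :: "(real \<Rightarrow> real) \<Rightarrow> real \<Rightarrow> real \<Rightarrow> real" where
  "persp_real g x y = (if y > 0 then y * g (x/y) else x * g 0)"

lemma persp_real_nonneg: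
  assumes "sym_entropy g" "0 \<le> x" "0 \<le> y"
  shows "0 \<le> persp_real g x y"
  using assms sym_entropy_nonneg[OF assms(1), of "x/y"] sym_entropy_nonneg[OF assms(1), of 0]
  by (auto simp: persp_real_def)

lemma persp_real_right_one: "persp_real g x 1 = g x"
  by (simp add: persp_real_def)

lemma persp_real_scale: "0 < l \<Longrightarrow> persp_real g (l*x) (l*y) = l * persp_real g x y"
  by (auto simp: persp_real_def zero_less_mult_iff)

lemma persp_real_commute:
  assumes "sym_entropy g" "0 \<le> x" "0 \<le> y"
  shows "persp_real g x y = persp_real g y x"
proof (cases "x > 0 \<and> y > 0")
  case True
  have "g (x/y) = (x/y) * g (1/(x/y))" using sym_entropy_symmetric[OF assms(1), of "x/y"] True by simp
  thus ?thesis using True by (simp add: persp_real_def)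
qed (use assms in \<open>auto simp: persp_real_def\<close>)

lemma persp_real_left_one: "sym_entropy g \<Longrightarrow> 0 \<le> s \<Longrightarrow> persp_real g 1 s = g s"
  using persp_real_commute[of g 1 s] by (simp add: persp_real_right_one)

lemma persp_real_diag: "sym_entropy g \<Longrightarrow> 0 \<le> x \<Longrightarrow> persp_real g x x = 0"
  by (auto simp: persp_real_def sym_entropy_one)

lemma persp_real_mono:
  "(\<And>x. 0 \<le> x \<Longrightarrow> g x \<le> g' x) \<Longrightarrow> 0 \<le> x \<Longrightarrow> 0 \<le> y \<Longrightarrow> persp_real g x y \<le> persp_real g' x y"
  by (auto simp: persp_real_def intro!: mult_left_mono)

lemma persp_real_max_min:
  assumes "sym_entropy g" "0 \<le> x" "0 \<le> y"
  shows "persp_real g x y = max x y * g (min x y / max x y)"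
proof (cases "x \<le> y")
  case True thus ?thesis using assms by (cases "y = 0") (auto simp: persp_real_def max_def min_def)
next
  case False
  hence "persp_real g x y = persp_real g y x" using persp_real_commute assms by auto
  thus ?thesis using False assms by (auto simp: persp_real_def max_def min_def)
qed

lemma eventually_at_within_mem: "(\<And>y. y \<in> S \<Longrightarrow> Q y) \<Longrightarrow> eventually Q (at x within S)"
  by (auto simp: eventually_at_filter)

text \<open>At the origin the perspective is squeezed between 0 and \<open>max x y * g 0\<close>, using that \<open>g\<close>
  decreases on \<open>[0,1]\<close>; elsewhere \<open>max x y\<close> stays away from 0.\<close>
lemma continuous_on_persp_real:
  assumes g: "sym_entropy g"
  shows "continuous_on ({0..} \<times> {0..}) (\<lambda>z. persp_real g (fst z) (snd z))"
proof -
  let ?D = "{0..} \<times> {0..} :: (real \<times> real) set"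
  let ?q = "\<lambda>z::real \<times> real. min (fst z) (snd z) / max (fst z) (snd z)"
  define Pm where "Pm = (\<lambda>z::real\<times>real. max (fst z) (snd z) * g (?q z))"
  have q01: "0 \<le> ?q z" "?q z \<le> 1" if "z \<in> ?D" for z
    using that by (auto simp: divide_le_eq_1 min_def max_def)
  have "continuous (at z within ?D) Pm" if z: "z \<in> ?D" for z
  proof (cases "z = (0,0)")
    case True
    have "((\<lambda>y. max (fst y) (snd y) * g 0) \<longlongrightarrow> max (fst z) (snd z) * g 0) (at z within ?D)"
      by (intro tendsto_intros)
    hence lim: "((\<lambda>y. max (fst y) (snd y) * g 0) \<longlongrightarrow> 0) (at z within ?D)" using True by simp
    have "(Pm \<longlongrightarrow> 0) (at z within ?D)"
    proof (rule tendsto_sandwich[OF _ _ tendsto_const lim])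
      show "\<forall>\<^sub>F y in at z within ?D. 0 \<le> Pm y"
        by (rule eventually_at_within_mem)
           (auto simp: Pm_def intro!: mult_nonneg_nonneg sym_entropy_nonneg[OF g] q01)
      show "\<forall>\<^sub>F y in at z within ?D. Pm y \<le> max (fst y) (snd y) * g 0"
        by (rule eventually_at_within_mem)
           (auto simp: Pm_def intro!: mult_left_mono sym_entropy_antimono[OF g] q01)
    qed
    thus ?thesis using True by (simp add: continuous_within Pm_def)
  next
    case False
    have "max (fst z) (snd z) \<noteq> 0" using z False by (cases z) (auto simp: max_def)
    hence "(?q \<longlongrightarrow> ?q z) (at z within ?D)" by (intro tendsto_intros) auto
    hence "((\<lambda>y. g (?q y)) \<longlongrightarrow> g (?q z)) (at z within ?D)"
      using z by (intro continuous_on_tendsto_compose[OF sym_entropy_continuous[OF g]]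
                    eventually_at_within_mem) auto
    hence "(Pm \<longlongrightarrow> Pm z) (at z within ?D)" unfolding Pm_def by (intro tendsto_intros)
    thus ?thesis by (simp add: continuous_within)
  qed
  hence "continuous_on ?D Pm" by (simp add: continuous_on_eq_continuous_within)
  moreover have "continuous_on ?D (\<lambda>z. persp_real g (fst z) (snd z)) = continuous_on ?D Pm"
    by (rule continuous_on_cong) (auto simp: Pm_def persp_real_max_min[OF g])
  ultimately show ?thesis by simp
qed

lemma continuous_on_persp_real_fst:
  assumes "sym_entropy g" "0 \<le> y"
  shows "continuous_on {0..} (\<lambda>x. persp_real g x y)"
proof -
  have "continuous_on {0..} ((\<lambda>z. persp_real g (fst z) (snd z)) \<circ> (\<lambda>x. (x, y)))"
    by (rule continuous_on_compose)
       (auto intro!: continuous_intros continuous_on_subset[OF continuous_on_persp_real[OF assms(1)]]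
             simp: assms(2))
  thus ?thesis by (simp add: o_def)
qed

lemma continuous_on_persp_real_snd:
  assumes "sym_entropy g" "0 \<le> x"
  shows "continuous_on {0..} (\<lambda>y. persp_real g x y)"
proof -
  have "continuous_on {0..} ((\<lambda>z. persp_real g (fst z) (snd z)) \<circ> (\<lambda>y. (x, y)))"
    by (rule continuous_on_compose)
       (auto intro!: continuous_intros continuous_on_subset[OF continuous_on_persp_real[OF assms(1)]]
             simp: assms(2))
  thus ?thesis by (simp add: o_def)
qed

lemma sym_entropy_recession_quotient_le:
  assumes g: "sym_entropy g" "0 \<le> r" "0 < \<alpha>"
  shows "g (1 + \<alpha> * r) / \<alpha> \<le> r * g 0"
proof (cases "r = 0")
  case True thus ?thesis using sym_entropy_one[OF g(1)] by simp
next
  case False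
  define X where "X = 1 + \<alpha> * r"
  have X: "X > 1" using g False by (simp add: X_def)
  have "g X = X * g (1/X)" using sym_entropy_symmetric[OF g(1), of X] X by simp
  also have "\<dots> \<le> X * ((1 - 1/X) * g 0)"
    using sym_entropy_le_chord[OF g(1), of "1/X"] X by (intro mult_left_mono) auto
  also have "\<dots> = \<alpha> * (r * g 0)" using X by (simp add: X_def field_simps)
  finally show ?thesis using g by (simp add: X_def divide_le_eq mult.commute)
qed

lemma sym_entropy_recession_tendsto:
  assumes g: "sym_entropy g" "0 \<le> r"
  shows "((\<lambda>\<alpha>. g (1 + \<alpha> * r) / \<alpha>) \<longlongrightarrow> r * g 0) at_top"
proof (cases "r = 0")
  case True thus ?thesis using sym_entropy_one[OF g(1)] by simp
next
  case False
  hence r: "r > 0" using g by simp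
  have ev: "\<forall>\<^sub>F \<alpha> in at_top. g (1 + \<alpha> * r) / \<alpha> = (1/\<alpha> + r) * g (1 / (1 + \<alpha> * r))"
    using eventually_gt_at_top[of 0]
  proof eventually_elim
    case (elim \<alpha>)
    have "1 + \<alpha>*r > 0" using elim r by (simp add: add_pos_pos)
    hence "g (1 + \<alpha>*r) = (1 + \<alpha>*r) * g (1/(1+\<alpha>*r))" by (rule sym_entropy_symmetric[OF g(1)])
    thus ?case using elim by (simp add: field_simps)
  qed
  have "((\<lambda>\<alpha>::real. 1/\<alpha> + r) \<longlongrightarrow> 0 + r) at_top"
    using tendsto_inverse_0_at_top[OF filterlim_ident] by (intro tendsto_intros) (simp add: inverse_eq_divide)
  moreover have "((\<lambda>\<alpha>. g (1 / (1 + \<alpha> * r))) \<longlongrightarrow> g 0) at_top"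
  proof (rule continuous_on_tendsto_compose[OF sym_entropy_continuous[OF g(1)]])
    have "filterlim (\<lambda>\<alpha>. 1 + \<alpha> * r) at_top at_top"
      by (rule filterlim_tendsto_add_at_top[OF tendsto_const])
         (rule filterlim_at_top_mult_tendsto_pos[OF tendsto_const r filterlim_ident])
    thus "((\<lambda>\<alpha>. 1 / (1 + \<alpha> * r)) \<longlongrightarrow> 0) at_top"
      using tendsto_inverse_0_at_top by (simp add: inverse_eq_divide)
    show "\<forall>\<^sub>F \<alpha> in at_top. 1 / (1 + \<alpha> * r) \<in> {0..}"
      using eventually_gt_at_top[of 0] by eventually_elim (use r in simp)
  qed simp
  ultimately have "((\<lambda>\<alpha>. (1/\<alpha> + r) * g (1 / (1 + \<alpha> * r))) \<longlongrightarrow> (0 + r) * g 0) at_top"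
    by (rule tendsto_mult)
  thus ?thesis using tendsto_cong[OF ev] by simp
qed

text \<open>The quotients increase with \<open>n\<close> and are bounded by their limits, which is what lets the
  supremum over \<open>n\<close> and the limit \<open>\<alpha> \<rightarrow> \<infinity>\<close> be exchanged.\<close>
lemma recF_SUP_sym_entropy:
  assumes g: "\<And>n. sym_entropy (g n)" and G: "\<And>x. 0 \<le> x \<Longrightarrow> G x = (SUP n. ereal (g n x))"
    and r: "0 \<le> r"
  shows "recF G r = (SUP n. ereal (r * g n 0))"
proof -
  let ?L = "SUP n. ereal (r * g n 0)"
  have ev: "\<forall>\<^sub>F \<alpha> in at_top. G (1 + \<alpha> * r) / ereal \<alpha> = (SUP n. ereal (g n (1 + \<alpha> * r) / \<alpha>))"
    using eventually_gt_at_top[of 0]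
  proof eventually_elim
    case (elim \<alpha>)
    have "G (1 + \<alpha> * r) / ereal \<alpha> = ereal (1/\<alpha>) * (SUP n. ereal (g n (1 + \<alpha> * r)))"
      using G elim r by (simp add: divide_ereal_def inverse_eq_divide mult.commute)
    also have "\<dots> = (SUP n. ereal (1/\<alpha>) * ereal (g n (1 + \<alpha> * r)))"
      using elim r by (subst SUP_ereal_mult_left) (auto intro!: sym_entropy_nonneg[OF g])
    finally show ?case by simp
  qed
  have "((\<lambda>\<alpha>. G (1 + \<alpha> * r) / ereal \<alpha>) \<longlongrightarrow> ?L) at_top"
  proof (subst tendsto_cong[OF ev], rule order_tendstoI)
    fix y assume "y < ?L"
    then obtain n where n: "y < ereal (r * g n 0)" by (auto simp: less_SUP_iff)
    have "((\<lambda>\<alpha>. ereal (g n (1 + \<alpha> * r) / \<alpha>)) \<longlongrightarrow> ereal (r * g n 0)) at_top"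
      using sym_entropy_recession_tendsto[OF g r] by (rule tendsto_ereal)
    hence "\<forall>\<^sub>F \<alpha> in at_top. y < ereal (g n (1 + \<alpha> * r) / \<alpha>)" using n by (rule order_tendstoD)
    thus "\<forall>\<^sub>F \<alpha> in at_top. y < (SUP n. ereal (g n (1 + \<alpha> * r) / \<alpha>))"
      by eventually_elim (auto simp: less_SUP_iff)
  next
    fix y assume y: "?L < y"
    show "\<forall>\<^sub>F \<alpha> in at_top. (SUP n. ereal (g n (1 + \<alpha> * r) / \<alpha>)) < y"
      using eventually_gt_at_top[of 0]
    proof eventually_elim
      case (elim \<alpha>)
      have "(SUP n. ereal (g n (1 + \<alpha> * r) / \<alpha>)) \<le> ?L"
        using sym_entropy_recession_quotient_le[OF g r elim] by (intro SUP_mono) auto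
      thus ?case using y by simp
    qed
  qed
  thus ?thesis unfolding recF_def by (intro tendsto_Lim) auto
qed

lemma recF_sym_entropy:
  assumes "sym_entropy g" "\<And>x. 0 \<le> x \<Longrightarrow> G x = ereal (g x)" "0 \<le> r"
  shows "recF G r = ereal (r * g 0)"
  using recF_SUP_sym_entropy[of "\<lambda>n. g" G r] assms by simp

lemma persp_eq_persp_real:
  assumes "sym_entropy g" "\<And>x. 0 \<le> x \<Longrightarrow> G x = ereal (g x)" "0 \<le> x" "0 \<le> y"
  shows "persp G x y = ereal (persp_real g x y)"
  using assms recF_sym_entropy[OF assms(1,2)] by (auto simp: persp_def persp_real_def)

lemma persp_SUP_sym_entropy:
  assumes g: "\<And>n. sym_entropy (g n)" and G: "\<And>x. 0 \<le> x \<Longrightarrow> G x = (SUP n. ereal (g n x))"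
    and xy: "0 \<le> x" "0 \<le> y"
  shows "persp G x y = (SUP n. ereal (persp_real (g n) x y))"
proof (cases "y > 0")
  case True
  have "persp G x y = ereal y * (SUP n. ereal (g n (x/y)))"
    using True xy G[of "x/y"] by (simp add: persp_def)
  also have "\<dots> = (SUP n. ereal y * ereal (g n (x/y)))"
    using True xy by (subst SUP_ereal_mult_left) (auto intro!: sym_entropy_nonneg[OF g])
  finally show ?thesis using True by (simp add: persp_real_def)
next
  case False
  hence "y = 0" using xy by simp
  thus ?thesis using recF_SUP_sym_entropy[OF g G xy(1)] by (simp add: persp_def persp_real_def)
qed

definition marginal_persp :: "(real \<Rightarrow> real) \<Rightarrow> real \<Rightarrow> real \<Rightarrow> real" where
  "marginal_persp g r1 r2 = Inf ((\<lambda>\<theta>. persp_real g \<theta> r1 + persp_real g \<theta> r2) ` {0<..})"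

lemma bdd_below_marginal_persp:
  assumes "sym_entropy g" "0 \<le> r1" "0 \<le> r2"
  shows "bdd_below ((\<lambda>\<theta>. persp_real g \<theta> r1 + persp_real g \<theta> r2) ` {0<..})"
  by (rule bdd_belowI[of _ 0]) (use assms in \<open>auto intro!: add_nonneg_nonneg persp_real_nonneg\<close>)

lemma marginal_persp_le:
  assumes "sym_entropy g" "0 \<le> r1" "0 \<le> r2" "0 < \<theta>"
  shows "marginal_persp g r1 r2 \<le> persp_real g \<theta> r1 + persp_real g \<theta> r2"
  unfolding marginal_persp_def
  by (rule cInf_lower[OF _ bdd_below_marginal_persp[OF assms(1-3)]]) (use assms in auto)

lemma marginal_persp_greatest:
  "(\<And>\<theta>. 0 < \<theta> \<Longrightarrow> c \<le> persp_real g \<theta> r1 + persp_real g \<theta> r2) \<Longrightarrow> c \<le> marginal_persp g r1 r2"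
  unfolding marginal_persp_def by (rule cInf_greatest) auto

lemma marginal_persp_less:
  "marginal_persp g r1 r2 < y \<Longrightarrow> \<exists>\<theta>>0. persp_real g \<theta> r1 + persp_real g \<theta> r2 < y"
  unfolding marginal_persp_def using cInf_lessD[of "(\<lambda>\<theta>. persp_real g \<theta> r1 + persp_real g \<theta> r2) ` {0<..}" y]
  by auto

lemma marginal_persp_nonneg:
  "sym_entropy g \<Longrightarrow> 0 \<le> r1 \<Longrightarrow> 0 \<le> r2 \<Longrightarrow> 0 \<le> marginal_persp g r1 r2"
  by (rule marginal_persp_greatest) (auto intro!: add_nonneg_nonneg persp_real_nonneg)

lemma marginal_persp_commute: "marginal_persp g r1 r2 = marginal_persp g r2 r1"
  unfolding marginal_persp_def by (simp add: add.commute)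

lemma marginal_persp_scale:
  assumes g: "sym_entropy g" "0 \<le> r1" "0 \<le> r2" "0 < l"
  shows "marginal_persp g (l*r1) (l*r2) = l * marginal_persp g r1 r2"
proof (rule antisym)
  have "marginal_persp g (l*r1) (l*r2) / l \<le> marginal_persp g r1 r2"
  proof (rule marginal_persp_greatest)
    fix \<theta> :: real assume "0 < \<theta>"
    hence "marginal_persp g (l*r1) (l*r2) \<le> persp_real g (l*\<theta>) (l*r1) + persp_real g (l*\<theta>) (l*r2)"
      using g by (intro marginal_persp_le) auto
    also have "\<dots> = l * (persp_real g \<theta> r1 + persp_real g \<theta> r2)"
      using g by (simp add: persp_real_scale distrib_left)
    finally show "marginal_persp g (l*r1) (l*r2) / l \<le> persp_real g \<theta> r1 + persp_real g \<theta> r2"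
      using g by (simp add: divide_le_eq mult.commute)
  qed
  thus "marginal_persp g (l*r1) (l*r2) \<le> l * marginal_persp g r1 r2"
    using g by (simp add: divide_le_eq mult.commute)
next
  show "l * marginal_persp g r1 r2 \<le> marginal_persp g (l*r1) (l*r2)"
  proof (rule marginal_persp_greatest)
    fix \<theta> :: real assume "0 < \<theta>"
    hence "l * marginal_persp g r1 r2 \<le> l * (persp_real g (\<theta>/l) r1 + persp_real g (\<theta>/l) r2)"
      using g by (intro mult_left_mono marginal_persp_le) auto
    also have "\<dots> = persp_real g \<theta> (l*r1) + persp_real g \<theta> (l*r2)"
      using persp_real_scale[OF g(4), of g "\<theta>/l"] g by (simp add: distrib_left)
    finally show "l * marginal_persp g r1 r2 \<le> persp_real g \<theta> (l*r1) + persp_real g \<theta> (l*r2)" .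
  qed
qed

lemma marginal_persp_mono:
  assumes "sym_entropy g" "\<And>x. 0 \<le> x \<Longrightarrow> g x \<le> g' x" "0 \<le> r1" "0 \<le> r2"
  shows "marginal_persp g r1 r2 \<le> marginal_persp g' r1 r2"
proof (rule marginal_persp_greatest)
  fix \<theta> :: real assume "0 < \<theta>"
  hence "marginal_persp g r1 r2 \<le> persp_real g \<theta> r1 + persp_real g \<theta> r2"
    using assms by (intro marginal_persp_le) auto
  also have "\<dots> \<le> persp_real g' \<theta> r1 + persp_real g' \<theta> r2"
    using assms \<open>0 < \<theta>\<close> by (intro add_mono persp_real_mono) auto
  finally show "marginal_persp g r1 r2 \<le> persp_real g' \<theta> r1 + persp_real g' \<theta> r2" .
qed

lemma marginal_persp_one_one: "sym_entropy g \<Longrightarrow> marginal_persp g 1 1 = 0"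
  using marginal_persp_le[of g 1 1 1] persp_real_diag[of g 1] marginal_persp_nonneg[of g 1 1]
  by simp

lemma Htilde_eq_marginal_persp:
  assumes g: "sym_entropy g" and G: "\<And>x. 0 \<le> x \<Longrightarrow> G x = ereal (g x)"
    and r: "0 \<le> r1" "0 \<le> r2"
  shows "Htilde G (r1, r2) = ereal (marginal_persp g r1 r2)"
proof -
  have "Htilde G (r1, r2) = (INF \<theta>\<in>{0<..}. ereal (persp_real g \<theta> r1 + persp_real g \<theta> r2))"
    unfolding Htilde_def using persp_eq_persp_real[OF g G] r by (intro INF_cong) auto
  also have "\<dots> = ereal (marginal_persp g r1 r2)"
    unfolding marginal_persp_def
    by (subst ereal_Inf'[OF bdd_below_marginal_persp[OF g r]]) (auto simp: image_comp)
  finally show ?thesis .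
qed

text \<open>Linear growth of \<open>g\<close> at infinity: only \<open>\<theta>\<close> in a bounded range matter for the infimum
  defining \<open>marginal_persp g 1 s\<close>.\<close>
lemma persp_real_sum_large:
  assumes g: "sym_entropy g" "0 < g 2"
  obtains B where "2 \<le> B"
    "\<And>\<theta> s. B < \<theta> \<Longrightarrow> 0 \<le> s \<Longrightarrow> c \<le> persp_real g \<theta> 1 + persp_real g \<theta> s"
proof
  define B where "B = max 2 (1 + c / g 2)"
  show "2 \<le> B" by (simp add: B_def)
  fix \<theta> s :: real assume \<theta>: "B < \<theta>" and s: "0 \<le> s"
  have "c / g 2 \<le> B - 1" by (simp add: B_def)
  hence "c \<le> (B - 1) * g 2" using g by (simp add: pos_divide_le_eq)
  also have "\<dots> \<le> (\<theta> - 1) * g 2" using \<theta> g by (intro mult_right_mono) auto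
  also have "\<dots> \<le> g \<theta>" using sym_entropy_linear_growth[OF g(1), of \<theta>] \<theta> by (simp add: B_def)
  also have "\<dots> \<le> persp_real g \<theta> 1 + persp_real g \<theta> s"
    using persp_real_nonneg[OF g(1), of \<theta> s] \<theta> s by (simp add: persp_real_right_one B_def)
  finally show "c \<le> persp_real g \<theta> 1 + persp_real g \<theta> s" .
qed

lemma marginal_persp_upper_semicontinuous:
  assumes g: "sym_entropy g" and s0: "0 \<le> s0" and y: "marginal_persp g 1 s0 < y"
  shows "\<forall>\<^sub>F s in at s0 within {0..}. marginal_persp g 1 s < y"
proof -
  obtain \<theta> where \<theta>: "0 < \<theta>" "persp_real g \<theta> 1 + persp_real g \<theta> s0 < y"
    using marginal_persp_less[OF y] by blast
  have "continuous_on {0..} (\<lambda>s. persp_real g \<theta> 1 + persp_real g \<theta> s)"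
    using continuous_on_persp_real_snd[OF g, of \<theta>] \<theta> by (intro continuous_intros) auto
  hence "((\<lambda>s. persp_real g \<theta> 1 + persp_real g \<theta> s) \<longlongrightarrow> persp_real g \<theta> 1 + persp_real g \<theta> s0)
           (at s0 within {0..})"
    using s0 by (simp add: continuous_on_def)
  hence "\<forall>\<^sub>F s in at s0 within {0..}. persp_real g \<theta> 1 + persp_real g \<theta> s < y"
    using \<theta>(2) by (rule order_tendstoD(2))
  moreover have "\<forall>\<^sub>F s in at s0 within {0..}. s \<in> {0..}" by (rule eventually_at_within_mem)
  ultimately show ?thesis
    by eventually_elim (use marginal_persp_le[OF g, of 1 _ \<theta>] \<theta> in force)
qed

text \<open>For \<open>\<theta>\<close> beyond the bound \<open>B\<close> the sum is large anyway; on the compact rectangle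
  \<open>[0,B] \<times> [0, s0+1]\<close> it is uniformly continuous in \<open>(\<theta>, s)\<close>.\<close>
lemma marginal_persp_lower_semicontinuous:
  assumes g: "sym_entropy g" "0 < g 2" and s0: "0 \<le> s0" and y: "y < marginal_persp g 1 s0"
  shows "\<forall>\<^sub>F s in at s0 within {0..}. y < marginal_persp g 1 s"
proof -
  define e where "e = marginal_persp g 1 s0 - y"
  have e: "0 < e" using y by (simp add: e_def)
  define Phi where "Phi = (\<lambda>z::real\<times>real. persp_real g (fst z) 1 + persp_real g (fst z) (snd z))"
  obtain B where B: "2 \<le> B"
    "\<And>\<theta> s. B < \<theta> \<Longrightarrow> 0 \<le> s \<Longrightarrow> marginal_persp g 1 s0 \<le> persp_real g \<theta> 1 + persp_real g \<theta> s"
    using persp_real_sum_large[OF g] by blast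
  define K where "K = {0..B} \<times> {0..s0+1}"
  have "continuous_on K (\<lambda>z. persp_real g (fst z) 1)"
    by (rule continuous_on_compose2[OF continuous_on_persp_real_fst[OF g(1), of 1]])
       (auto simp: K_def intro!: continuous_intros)
  hence "continuous_on K Phi"
    unfolding Phi_def K_def
    by (intro continuous_intros continuous_on_subset[OF continuous_on_persp_real[OF g(1)]]) auto
  hence "uniformly_continuous_on K Phi" unfolding K_def
    by (intro compact_uniformly_continuous compact_Times compact_Icc)
  then obtain d where d: "d > 0"
    "\<And>z z'. z \<in> K \<Longrightarrow> z' \<in> K \<Longrightarrow> dist z' z < d \<Longrightarrow> dist (Phi z') (Phi z) < e/2"
    unfolding uniformly_continuous_on_def using e by (metis half_gt_zero)
  have "\<forall>\<^sub>F s in at s0 within {0..}. marginal_persp g 1 s0 - e < marginal_persp g 1 s"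
    unfolding eventually_at
  proof (intro exI[of _ "min d 1"] conjI ballI impI)
    show "0 < min d 1" using d by simp
    fix s assume s: "s \<in> {0..}" "s \<noteq> s0 \<and> dist s s0 < min d 1"
    have "marginal_persp g 1 s0 - e/2 \<le> marginal_persp g 1 s"
    proof (rule marginal_persp_greatest)
      fix \<theta> :: real assume \<theta>: "0 < \<theta>"
      show "marginal_persp g 1 s0 - e/2 \<le> persp_real g \<theta> 1 + persp_real g \<theta> s"
      proof (cases "\<theta> \<le> B")
        case True
        have "(\<theta>, s) \<in> K" "(\<theta>, s0) \<in> K" using True \<theta> s s0 by (auto simp: K_def dist_real_def)
        moreover have "dist (\<theta>, s) (\<theta>, s0) < d" using s by (simp add: dist_Pair_Pair)
        ultimately have "\<bar>Phi (\<theta>, s) - Phi (\<theta>, s0)\<bar> < e/2" using d(2) by (simp add: dist_real_def)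
        hence "Phi (\<theta>, s0) - e/2 \<le> Phi (\<theta>, s)" by (simp only: abs_less_iff) simp
        moreover have "marginal_persp g 1 s0 \<le> Phi (\<theta>, s0)"
          using marginal_persp_le[OF g(1), of 1 s0 \<theta>] \<theta> s0 by (simp add: Phi_def)
        ultimately show ?thesis unfolding Phi_def by simp
      next
        case False thus ?thesis using B(2)[of \<theta> s] s e by simp
      qed
    qed
    thus "marginal_persp g 1 s0 - e < marginal_persp g 1 s" using e by simp
  qed
  thus ?thesis by eventually_elim (simp add: e_def)
qed

lemma continuous_on_marginal_persp:
  assumes "sym_entropy g" "0 < g 2"
  shows "continuous_on {0..} (\<lambda>s. marginal_persp g 1 s)"
  unfolding continuous_on_def
proof (intro ballI order_tendstoI)
  fix s0 :: real assume "s0 \<in> {0..}"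
  thus "\<And>y. y < marginal_persp g 1 s0 \<Longrightarrow> \<forall>\<^sub>F s in at s0 within {0..}. y < marginal_persp g 1 s"
    "\<And>y. marginal_persp g 1 s0 < y \<Longrightarrow> \<forall>\<^sub>F s in at s0 within {0..}. marginal_persp g 1 s < y"
    using marginal_persp_lower_semicontinuous[OF assms] marginal_persp_upper_semicontinuous[OF assms(1)]
    by auto
qed

lemma lsc_envelope_eq_of_lsc_minorant:
  assumes "p \<in> D" "lsc_within D k" "\<And>q. q \<in> D \<Longrightarrow> k q \<le> g q" "k p = g p"
  shows "lsc_envelope D g p = g p"
  unfolding lsc_envelope_def
proof (rule antisym)
  show "(SUP h\<in>{h. lsc_within D h \<and> (\<forall>q\<in>D. h q \<le> g q)}. h p) \<le> g p"
    using assms(1) by (intro SUP_least) auto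
  have "k p \<le> (SUP h\<in>{h. lsc_within D h \<and> (\<forall>q\<in>D. h q \<le> g q)}. h p)"
    by (rule SUP_upper) (use assms in auto)
  thus "g p \<le> (SUP h\<in>{h. lsc_within D h \<and> (\<forall>q\<in>D. h q \<le> g q)}. h p)" using assms(4) by simp
qed

lemma lsc_envelope_le: "p \<in> D \<Longrightarrow> lsc_envelope D g p \<le> g p"
  unfolding lsc_envelope_def by (intro SUP_least) auto

lemma lsc_envelope_mono:
  "(\<And>q. q \<in> D \<Longrightarrow> g q \<le> g' q) \<Longrightarrow> lsc_envelope D g p \<le> lsc_envelope D g' p"
  unfolding lsc_envelope_def by (rule SUP_subset_mono) (auto intro: order_trans)

lemma lsc_within_perspective:
  fixes h :: "real \<Rightarrow> real"
  assumes h: "continuous_on {0..} h" "\<And>x. 0 \<le> x \<Longrightarrow> 0 \<le> h x"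
  shows "lsc_within ({0..} \<times> {0..}) (\<lambda>q. if fst q > 0 then ereal (fst q * h (snd q / fst q)) else 0)"
    (is "lsc_within ?D ?k")
  unfolding lsc_within_def le_Liminf_iff
proof (intro ballI allI impI)
  fix q y assume q: "q \<in> ?D" and y: "y < ?k q"
  show "\<forall>\<^sub>F z in at q within ?D. y < ?k z"
  proof (cases "fst q > 0")
    case False
    hence "y < 0" using y by simp
    thus ?thesis
      by (intro eventually_at_within_mem) (auto intro!: mult_nonneg_nonneg h(2) less_le_trans[of y 0])
  next
    case True
    have "((\<lambda>z. snd z / fst z) \<longlongrightarrow> snd q / fst q) (at q within ?D)"
      using True by (intro tendsto_intros) auto
    hence "((\<lambda>z. h (snd z / fst z)) \<longlongrightarrow> h (snd q / fst q)) (at q within ?D)"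
      using q True by (intro continuous_on_tendsto_compose[OF h(1)] eventually_at_within_mem) auto
    hence "((\<lambda>z. ereal (fst z * h (snd z / fst z))) \<longlongrightarrow> ?k q) (at q within ?D)"
      using True by (auto intro!: tendsto_intros)
    hence "\<forall>\<^sub>F z in at q within ?D. y < ereal (fst z * h (snd z / fst z))"
      using y by (rule order_tendstoD)
    moreover have "((\<lambda>z. fst z) \<longlongrightarrow> fst q) (at q within ?D)" by (intro tendsto_intros)
    hence "\<forall>\<^sub>F z in at q within ?D. 0 < fst z" using True by (rule order_tendstoD)
    ultimately show ?thesis by eventually_elim simp
  qed
qed

text \<open>The lsc envelope does not change \<open>Htilde\<close> at \<open>(1, s)\<close>: by homogeneity
  \<open>Htilde (r1, r2) = r1 * marginal_persp g 1 (r2/r1)\<close> for \<open>r1 > 0\<close>, and extended by 0 at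
  \<open>r1 = 0\<close> this is an lsc minorant of \<open>Htilde\<close>.\<close>
lemma HF_eq_marginal_persp:
  assumes g: "sym_entropy g" "0 < g 2" and G: "\<And>x. 0 \<le> x \<Longrightarrow> G x = ereal (g x)"
    and s: "0 \<le> s"
  shows "HF G 1 s = ereal (marginal_persp g 1 s)"
proof -
  let ?D = "{0..} \<times> {0..} :: (real \<times> real) set"
  define k where "k = (\<lambda>q::real\<times>real. if fst q > 0 then ereal (fst q * marginal_persp g 1 (snd q / fst q)) else 0)"
  have Htilde: "Htilde G q = ereal (marginal_persp g (fst q) (snd q))" if "q \<in> ?D" for q
    using Htilde_eq_marginal_persp[OF g(1) G, of "fst q" "snd q"] that by (cases q) auto
  have "lsc_within ?D k"
    unfolding k_def
    by (rule lsc_within_perspective[OF continuous_on_marginal_persp[OF g] marginal_persp_nonneg[OF g(1)]]) simp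
  moreover have "k q \<le> Htilde G q" if q: "q \<in> ?D" for q
  proof (cases "fst q > 0")
    case True
    have "marginal_persp g (fst q * 1) (fst q * (snd q / fst q)) = fst q * marginal_persp g 1 (snd q / fst q)"
      using True q by (intro marginal_persp_scale[OF g(1)]) auto
    thus ?thesis using True Htilde[OF q] by (simp add: k_def)
  next
    case False
    thus ?thesis using Htilde[OF q] marginal_persp_nonneg[OF g(1), of "fst q" "snd q"] q
      by (auto simp: k_def)
  qed
  moreover have "k (1, s) = Htilde G (1, s)" using Htilde[of "(1, s)"] s by (simp add: k_def)
  ultimately have "lsc_envelope ?D (Htilde G) (1, s) = Htilde G (1, s)"
    by (intro lsc_envelope_eq_of_lsc_minorant[of _ _ k]) (use s in auto)
  thus ?thesis unfolding HF_def using Htilde[of "(1, s)"] s by simp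
qed

definition Ta_real :: "real \<Rightarrow> (real \<Rightarrow> real) \<Rightarrow> real \<Rightarrow> real" where
  "Ta_real a g s = 2 powr (1/a - 1) * marginal_persp g 1 s"

lemma Ta_eq_Ta_real:
  assumes "sym_entropy g" "0 < g 2" "\<And>x. 0 \<le> x \<Longrightarrow> G x = ereal (g x)" "0 \<le> s"
  shows "Ta a G s = ereal (Ta_real a g s)"
  using HF_eq_marginal_persp[OF assms] by (simp add: Ta_def Ta_real_def)

lemma persp_real_jointly_convex:
  assumes g: "sym_entropy g" and x: "0 \<le> x1" "0 \<le> x2" and y: "0 < y1" "0 < y2"
    and t: "0 \<le> t" "t \<le> 1"
  shows "persp_real g (t*x1 + (1-t)*x2) (t*y1 + (1-t)*y2) \<le> t * persp_real g x1 y1 + (1-t) * persp_real g x2 y2"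
proof -
  define Y where "Y = t*y1 + (1-t)*y2"
  have Y: "0 < Y"
    using t y by (cases "t = 0") (auto simp: Y_def intro: add_pos_nonneg)
  define l where "l = t*y1/Y"
  have l: "0 \<le> l" "l \<le> 1" "1 - l = (1-t)*y2/Y"
    using Y t y by (auto simp: l_def Y_def field_simps)
  have eq: "(t*x1 + (1-t)*x2) / Y = l*(x1/y1) + (1-l)*(x2/y2)"
    using Y y unfolding l(3) by (simp add: l_def field_simps)
  have "g ((t*x1 + (1-t)*x2) / Y) \<le> l * g (x1/y1) + (1-l) * g (x2/y2)"
    unfolding eq using x y l by (intro convex_on_nonnegD sym_entropy_convex[OF g]) auto
  hence "Y * g ((t*x1 + (1-t)*x2) / Y) \<le> Y * (l * g (x1/y1) + (1-l) * g (x2/y2))"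
    using Y by (intro mult_left_mono) auto
  also have "\<dots> = t * (y1 * g (x1/y1)) + (1-t) * (y2 * g (x2/y2))"
    using Y unfolding l(3) by (simp add: l_def field_simps)
  finally show ?thesis using Y y by (simp add: persp_real_def Y_def)
qed

lemma marginal_persp_convex_pos:
  assumes g: "sym_entropy g" and s: "0 < s1" "0 < s2" and t: "0 \<le> t" "t \<le> 1"
  shows "marginal_persp g 1 (t * s1 + (1-t) * s2) \<le> t * marginal_persp g 1 s1 + (1-t) * marginal_persp g 1 s2"
proof (rule field_le_epsilon)
  fix e :: real assume e: "0 < e"
  obtain \<theta>1 where \<theta>1: "0 < \<theta>1" "persp_real g \<theta>1 1 + persp_real g \<theta>1 s1 < marginal_persp g 1 s1 + e"
    using marginal_persp_less[of g 1 s1 "marginal_persp g 1 s1 + e"] e by auto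
  obtain \<theta>2 where \<theta>2: "0 < \<theta>2" "persp_real g \<theta>2 1 + persp_real g \<theta>2 s2 < marginal_persp g 1 s2 + e"
    using marginal_persp_less[of g 1 s2 "marginal_persp g 1 s2 + e"] e by auto
  define \<theta> where "\<theta> = t*\<theta>1 + (1-t)*\<theta>2"
  have "0 < \<theta>" using t \<theta>1 \<theta>2 by (cases "t = 0") (auto simp: \<theta>_def intro: add_pos_nonneg)
  hence "marginal_persp g 1 (t * s1 + (1-t) * s2) \<le> persp_real g \<theta> 1 + persp_real g \<theta> (t * s1 + (1-t) * s2)"
    using s t by (intro marginal_persp_le[OF g]) auto
  also have "persp_real g \<theta> 1 \<le> t * persp_real g \<theta>1 1 + (1-t) * persp_real g \<theta>2 1"
    using persp_real_jointly_convex[OF g, of \<theta>1 \<theta>2 1 1 t] \<theta>1 \<theta>2 t by (simp add: \<theta>_def)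
  also have "persp_real g \<theta> (t * s1 + (1-t) * s2) \<le> t * persp_real g \<theta>1 s1 + (1-t) * persp_real g \<theta>2 s2"
    unfolding \<theta>_def using \<theta>1 \<theta>2 t s by (intro persp_real_jointly_convex[OF g]) auto
  also have "t * persp_real g \<theta>1 1 + (1-t) * persp_real g \<theta>2 1 + (t * persp_real g \<theta>1 s1 + (1-t) * persp_real g \<theta>2 s2)
      = t * (persp_real g \<theta>1 1 + persp_real g \<theta>1 s1) + (1-t) * (persp_real g \<theta>2 1 + persp_real g \<theta>2 s2)"
    by (simp add: algebra_simps)
  also have "\<dots> \<le> t * (marginal_persp g 1 s1 + e) + (1-t) * (marginal_persp g 1 s2 + e)"
    using \<theta>1 \<theta>2 t by (intro add_mono[OF mult_left_mono mult_left_mono]) auto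
  finally show "marginal_persp g 1 (t * s1 + (1-t) * s2) \<le> t * marginal_persp g 1 s1 + (1-t) * marginal_persp g 1 s2 + e"
    by (simp add: algebra_simps)
qed

lemma convex_on_nonneg_of_pos:
  fixes f :: "real \<Rightarrow> real"
  assumes f: "continuous_on {0..} f" and c: "convex_on {0<..} f"
  shows "convex_on {0..} f"
  unfolding convex_on_alt
proof (intro conjI ballI allI impI)
  show "convex {0::real..}" by simp
  fix x y t :: real assume xy: "x \<in> {0..}" "y \<in> {0..}" and t: "0 \<le> t \<and> t \<le> 1"
  have shift: "((\<lambda>e. f (z + e)) \<longlongrightarrow> f z) (at_right 0)" if "0 \<le> z" for z
  proof -
    have "((\<lambda>e::real. z + e) \<longlongrightarrow> z + 0) (at_right 0)" by (intro tendsto_intros)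
    moreover have "\<forall>\<^sub>F e in at_right 0. z + e \<in> {0..}"
      unfolding eventually_at_right_field using that by (intro exI[of _ 1]) auto
    ultimately show ?thesis using continuous_on_tendsto_compose[OF f] that by simp
  qed
  have ev: "\<forall>\<^sub>F e in at_right 0. f (t*x + (1-t)*y + e) \<le> t * f (x + e) + (1-t) * f (y + e)"
    unfolding eventually_at_right_field
  proof (intro exI[of _ 1] conjI allI impI)
    fix e :: real assume "0 < e"
    hence "f (t *\<^sub>R (x+e) + (1-t) *\<^sub>R (y+e)) \<le> t * f (x+e) + (1-t) * f (y+e)"
      using xy t c unfolding convex_on_alt by auto
    thus "f (t*x + (1-t)*y + e) \<le> t * f (x + e) + (1-t) * f (y + e)" by (simp add: algebra_simps)
  qed simp
  have "((\<lambda>e. t * f (x + e) + (1-t) * f (y + e)) \<longlongrightarrow> t * f x + (1-t) * f y) (at_right 0)"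
    using xy by (intro tendsto_intros shift) auto
  from tendsto_le[OF trivial_limit_at_right_real this shift ev]
  show "f (t *\<^sub>R x + (1 - t) *\<^sub>R y) \<le> t * f x + (1 - t) * f y" using xy t by simp
qed

lemma sym_entropy_Ta_real:
  assumes g: "sym_entropy g" "0 < g 2"
  shows "sym_entropy (Ta_real a g)"
  unfolding sym_entropy_def Ta_real_def
proof (intro conjI allI impI)
  show "0 \<le> 2 powr (1/a - 1) * marginal_persp g 1 x" if "0 \<le> x" for x
    using marginal_persp_nonneg[OF g(1), of 1 x] that by simp
  show "2 powr (1/a - 1) * marginal_persp g 1 1 = 0" using marginal_persp_one_one[OF g(1)] by simp
  show cont: "continuous_on {0..} (\<lambda>s. 2 powr (1/a - 1) * marginal_persp g 1 s)"
    by (intro continuous_intros continuous_on_marginal_persp[OF g])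
  show "2 powr (1/a - 1) * marginal_persp g 1 s = s * (2 powr (1/a - 1) * marginal_persp g 1 (1 / s))"
    if s: "0 < s" for s
  proof -
    have "marginal_persp g 1 s = marginal_persp g (s*1) (s*(1/s))"
      using s by (simp add: marginal_persp_commute)
    also have "\<dots> = s * marginal_persp g 1 (1/s)" using s by (intro marginal_persp_scale[OF g(1)]) auto
    finally show ?thesis by simp
  qed
  show "convex_on {0..} (\<lambda>s. 2 powr (1/a - 1) * marginal_persp g 1 s)"
  proof (rule convex_on_nonneg_of_pos[OF cont])
    show "convex_on {0<..} (\<lambda>s. 2 powr (1/a - 1) * marginal_persp g 1 s)"
      unfolding convex_on_alt
    proof (intro conjI ballI allI impI)
      fix x y t :: real assume "x \<in> {0<..}" "y \<in> {0<..}" "0 \<le> t \<and> t \<le> 1"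
      hence "marginal_persp g 1 (t*x + (1-t)*y) \<le> t * marginal_persp g 1 x + (1-t) * marginal_persp g 1 y"
        by (intro marginal_persp_convex_pos[OF g(1)]) auto
      hence "2 powr (1/a - 1) * marginal_persp g 1 (t*x + (1-t)*y)
          \<le> 2 powr (1/a - 1) * (t * marginal_persp g 1 x + (1-t) * marginal_persp g 1 y)"
        by (rule mult_left_mono) simp
      thus "2 powr (1/a - 1) * marginal_persp g 1 (t *\<^sub>R x + (1-t) *\<^sub>R y)
          \<le> t * (2 powr (1/a - 1) * marginal_persp g 1 x) + (1-t) * (2 powr (1/a - 1) * marginal_persp g 1 y)"
        by (simp add: algebra_simps)
    qed simp
  qed
qed

text \<open>Convexity gives continuity on the open half-line and upper semicontinuity at 0 (via the
  chord to \<open>g 1\<close>); lower semicontinuity at 0 is assumed.\<close>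
lemma continuous_on_of_convex_lsc:
  fixes g :: "real \<Rightarrow> real"
  assumes c: "convex_on {0..} g" and lsc: "\<And>e. 0 < e \<Longrightarrow> \<forall>\<^sub>F x in at 0 within {0..}. g 0 - e < g x"
  shows "continuous_on {0..} g"
  unfolding continuous_on_eq_continuous_within
proof
  fix x :: real assume x: "x \<in> {0..}"
  have ci: "continuous_on {0<..} g"
    by (rule convex_on_continuous[OF _ convex_on_subset[OF c]]) auto
  show "continuous (at x within {0..}) g"
  proof (cases "x = 0")
    case False
    hence "continuous (at x) g" using x ci by (simp add: continuous_on_eq_continuous_at)
    thus ?thesis by (rule continuous_at_imp_continuous_at_within)
  next
    case True
    show ?thesis unfolding continuous_within True
    proof (rule order_tendstoI)
      fix y assume "y < g 0"
      from lsc[of "g 0 - y"] this show "\<forall>\<^sub>F u in at 0 within {0..}. y < g u" by simp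
    next
      fix y assume y: "g 0 < y"
      have "((\<lambda>u. (1-u) * g 0 + u * g 1) \<longlongrightarrow> (1-0) * g 0 + 0 * g 1) (at 0 within {0..})"
        by (intro tendsto_intros)
      hence "\<forall>\<^sub>F u in at 0 within {0..}. (1-u) * g 0 + u * g 1 < y" using y by (intro order_tendstoD(2)) auto
      moreover have "\<forall>\<^sub>F u in at 0 within {0..}. u \<in> {0..}" by (rule eventually_at_within_mem)
      moreover have lim0: "((\<lambda>u. u) \<longlongrightarrow> 0) (at (0::real) within {0..})" by (intro tendsto_intros)
      have "\<forall>\<^sub>F u in at 0 within {0..}. u < (1::real)" using order_tendstoD(2)[OF lim0, of 1] by simp
      ultimately show "\<forall>\<^sub>F u in at 0 within {0..}. g u < y"
      proof eventually_elim
        case (elim u)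
        have "g (u * 1 + (1-u) * 0) \<le> u * g 1 + (1-u) * g 0" using elim by (intro convex_on_nonnegD[OF c]) auto
        thus ?case using elim by simp
      qed
    qed
  qed
qed

lemma sym_entropy_of_Gamma0:
  assumes G: "Gamma0 G" and fin: "\<And>x. 0 \<le> x \<Longrightarrow> G x \<noteq> \<infinity>"
    and sym: "\<forall>s>0. G s = ereal s * G (1/s)"
  shows "sym_entropy (\<lambda>x. real_of_ereal (G x))"
    and "\<And>x. 0 \<le> x \<Longrightarrow> G x = ereal (real_of_ereal (G x))"
proof -
  define g where "g = (\<lambda>x. real_of_ereal (G x))"
  have nn: "\<And>x. 0 \<le> x \<Longrightarrow> 0 \<le> G x" using G by (simp add: Gamma0_def)
  have eq: "G x = ereal (g x)" if "0 \<le> x" for x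
    using nn[OF that] fin[OF that] by (cases "G x") (auto simp: g_def)
  thus "\<And>x. 0 \<le> x \<Longrightarrow> G x = ereal (real_of_ereal (G x))" by (simp only: g_def)
  have c: "convex_on {0..} g"
    unfolding convex_on_alt
  proof (intro conjI ballI allI impI)
    fix x y t :: real assume h: "x \<in> {0..}" "y \<in> {0..}" "0 \<le> t \<and> t \<le> 1"
    have "G (t*x + (1-t)*y) \<le> ereal t * G x + ereal (1-t) * G y"
      using G h unfolding Gamma0_def convex_nn_def by auto
    thus "g (t *\<^sub>R x + (1 - t) *\<^sub>R y) \<le> t * g x + (1 - t) * g y"
      using eq[of "t*x + (1-t)*y"] eq[of x] eq[of y] h by simp
  qed simp
  have lsc: "\<forall>\<^sub>F x in at 0 within {0..}. g 0 - e < g x" if e: "0 < e" for e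
  proof -
    have "G 0 \<le> Liminf (at 0 within {0..}) G" using G unfolding Gamma0_def lsc_within_def by auto
    moreover have "ereal (g 0 - e) < G 0" using eq[of 0] e by simp
    ultimately have "\<forall>\<^sub>F x in at 0 within {0..}. ereal (g 0 - e) < G x" by (simp add: le_Liminf_iff)
    moreover have "\<forall>\<^sub>F x in at 0 within {0..}. x \<in> {0..}" by (rule eventually_at_within_mem)
    ultimately show ?thesis by eventually_elim (use eq in auto)
  qed
  show "sym_entropy (\<lambda>x. real_of_ereal (G x))" unfolding g_def[symmetric] sym_entropy_def
  proof (intro conjI allI impI)
    show "0 \<le> g x" if "0 \<le> x" for x using nn[OF that] eq[OF that] by simp
    show "g 1 = 0" using G by (simp add: Gamma0_def g_def)
    show "convex_on {0..} g" by (rule c)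
    show "continuous_on {0..} g" by (rule continuous_on_of_convex_lsc[OF c lsc])
    show "g s = s * g (1/s)" if s: "0 < s" for s
      using sym[rule_format, OF s] eq[of s] eq[of "1/s"] s by simp
  qed
qed

lemma persp_pow_metric_finite: "persp_pow_metric a G \<Longrightarrow> 0 \<le> x \<Longrightarrow> G x \<noteq> \<infinity>"
  using persp_def[of G x 1] by (auto simp: persp_pow_metric_def)

lemma persp_pow_metric_real:
  assumes "persp_pow_metric a G" "sym_entropy g" "\<And>x. 0 \<le> x \<Longrightarrow> G x = ereal (g x)"
  shows "metric_nn (\<lambda>x y. persp_real g x y powr a)"
  using assms persp_eq_persp_real[OF assms(2,3)]
  unfolding persp_pow_metric_def metric_nn_def by (metis real_of_ereal.simps(1))

lemma sym_entropy_pos_of_metric: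
  assumes "sym_entropy g" "metric_nn (\<lambda>x y. persp_real g x y powr a)" "0 \<le> x" "x \<noteq> 1"
  shows "0 < g x"
  using assms sym_entropy_nonneg[OF assms(1,3)]
  unfolding metric_nn_def by (fastforce simp: persp_real_right_one)

text \<open>Concavity of \<open>u \<mapsto> u powr a\<close>, via convexity of the inverse map \<open>v \<mapsto> v powr (1/a)\<close>.\<close>
lemma powr_add_le_two_mean:
  fixes U V a :: real
  assumes "0 \<le> U" "0 \<le> V" "0 < a" "a \<le> 1"
  shows "U powr a + V powr a \<le> 2 * ((U + V)/2) powr a"
proof (cases "U = 0 \<or> V = 0")
  case True
  have "W powr a \<le> 2 * (W/2) powr a" if "0 \<le> W" for W :: real
  proof -
    have "W powr a = 2 powr a * (W/2) powr a" by (simp flip: powr_mult)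
    also have "\<dots> \<le> 2 * (W/2) powr a"
      using powr_mono[of a 1 2] assms by (intro mult_right_mono) auto
    finally show ?thesis .
  qed
  thus ?thesis using True assms by auto
next
  case False
  hence UV: "0 < U" "0 < V" using assms by auto
  have "((U powr a + V powr a)/2) powr (1/a) \<le> ((U powr a) powr (1/a) + (V powr a) powr (1/a))/2"
    using convex_onD[OF powr_convex[of "1/a"], of "1/2" "U powr a" "V powr a"] UV assms
    by (simp add: add_divide_distrib)
  also have "\<dots> = (U + V)/2" using assms UV by (simp add: powr_powr)
  finally have "(((U powr a + V powr a)/2) powr (1/a)) powr a \<le> ((U + V)/2) powr a"
    using assms by (intro powr_mono2) auto
  thus ?thesis using assms UV by (simp add: powr_powr)
qed

text \<open>The triangle inequality \<open>d(1,s) \<le> d(1,\<theta>) + d(\<theta>,s)\<close> for \<open>d = persp_real g ^ a\<close>, combined with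
  concavity of \<open>u \<mapsto> u^a\<close>, bounds \<open>g s\<close> by \<open>2^(1/a-1)\<close> times every sum defining the infimum.\<close>
lemma le_Ta_real_of_metric:
  assumes g: "sym_entropy g" and a: "0 < a" "a < 1"
    and m: "metric_nn (\<lambda>x y. persp_real g x y powr a)" and s: "0 \<le> s"
  shows "g s \<le> Ta_real a g s"
proof -
  define k where "k = 2 powr (1/a - 1)"
  have "g s / k \<le> marginal_persp g 1 s"
  proof (rule marginal_persp_greatest)
    fix \<theta> :: real assume \<theta>: "0 < \<theta>"
    define U where "U = persp_real g \<theta> 1"
    define V where "V = persp_real g \<theta> s"
    have UV: "0 \<le> U" "0 \<le> V" using persp_real_nonneg[OF g] \<theta> s by (auto simp: U_def V_def)
    have "persp_real g 1 s powr a \<le> persp_real g 1 \<theta> powr a + persp_real g \<theta> s powr a"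
      using m \<theta> s unfolding metric_nn_def by (metis less_imp_le zero_le_one)
    hence "g s powr a \<le> U powr a + V powr a"
      using persp_real_left_one[OF g s] persp_real_commute[OF g, of 1 \<theta>] \<theta> by (simp add: U_def V_def)
    also have "\<dots> \<le> 2 * ((U + V)/2) powr a" by (rule powr_add_le_two_mean) (use UV a in auto)
    finally have h: "g s powr a \<le> 2 * ((U + V)/2) powr a" .
    have gs: "0 \<le> g s" using sym_entropy_nonneg[OF g s] .
    have "g s = (g s powr a) powr (1/a)" using gs a by (simp add: powr_powr)
    also have "\<dots> \<le> (2 * ((U + V)/2) powr a) powr (1/a)" using h a gs by (intro powr_mono2) auto
    also have "\<dots> = 2 powr (1/a) * ((U + V)/2)" using a UV by (simp add: powr_mult powr_powr)
    also have "\<dots> = k * (U + V)" by (simp add: k_def powr_diff)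
    finally show "g s / k \<le> persp_real g \<theta> 1 + persp_real g \<theta> s"
      by (simp add: divide_le_eq U_def V_def mult.commute k_def)
  qed
  thus ?thesis by (simp add: divide_le_eq mult.commute k_def Ta_real_def)
qed

lemma Ta_real_mono:
  "sym_entropy g \<Longrightarrow> (\<And>x. 0 \<le> x \<Longrightarrow> g x \<le> g' x) \<Longrightarrow> 0 \<le> s \<Longrightarrow> Ta_real a g s \<le> Ta_real a g' s"
  unfolding Ta_real_def by (intro mult_left_mono marginal_persp_mono) auto

lemma Ta_real_iterates:
  assumes g: "sym_entropy g" and a: "0 < a" "a < 1"
    and m: "metric_nn (\<lambda>x y. persp_real g x y powr a)"
  shows "sym_entropy ((Ta_real a ^^ n) g)" "0 < (Ta_real a ^^ n) g 2"
    and "0 \<le> x \<Longrightarrow> (Ta_real a ^^ n) g x \<le> (Ta_real a ^^ Suc n) g x"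
proof -
  have g2: "0 < g 2" using sym_entropy_pos_of_metric[OF g m] by simp
  have "sym_entropy ((Ta_real a ^^ n) g) \<and> 0 < (Ta_real a ^^ n) g 2 \<and>
        (\<forall>x\<ge>0. (Ta_real a ^^ n) g x \<le> (Ta_real a ^^ Suc n) g x)"
  proof (induction n)
    case 0 thus ?case using g g2 le_Ta_real_of_metric[OF g a m] by simp
  next
    case (Suc n)
    hence "0 < (Ta_real a ^^ n) g 2" "(Ta_real a ^^ n) g 2 \<le> (Ta_real a ^^ Suc n) g 2" by auto
    hence "0 < (Ta_real a ^^ Suc n) g 2" by linarith
    thus ?case using Suc sym_entropy_Ta_real[of "(Ta_real a ^^ n) g" a]
      by (auto intro!: Ta_real_mono)
  qed
  thus "sym_entropy ((Ta_real a ^^ n) g)" "0 < (Ta_real a ^^ n) g 2"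
    "0 \<le> x \<Longrightarrow> (Ta_real a ^^ n) g x \<le> (Ta_real a ^^ Suc n) g x" by auto
qed

lemma Ta_iterates_eq_Ta_real_iterates:
  assumes "\<And>n. sym_entropy ((Ta_real a ^^ n) g)" "\<And>n. 0 < (Ta_real a ^^ n) g 2"
    and "\<And>x. 0 \<le> x \<Longrightarrow> F x = ereal (g x)" "0 \<le> x"
  shows "(Ta a ^^ n) F x = ereal ((Ta_real a ^^ n) g x)"
  using assms(4)
proof (induction n arbitrary: x)
  case (Suc n) thus ?case using Ta_eq_Ta_real[OF assms(1,2)] by simp
qed (use assms(3) in simp)

lemma Gamma0_SUP_sym_entropy:
  assumes g: "\<And>n. sym_entropy (g n)"
  shows "Gamma0 (\<lambda>x. SUP n. ereal (g n x))"
  unfolding Gamma0_def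
proof (intro conjI allI impI)
  show "0 \<le> (SUP n. ereal (g n x))" if "0 \<le> x" for x
    using sym_entropy_nonneg[OF g that] by (intro SUP_upper2[OF UNIV_I]) auto
  show "(SUP n. ereal (g n 1)) = 0" using sym_entropy_one[OF g] by simp
  show "convex_nn (\<lambda>x. SUP n. ereal (g n x))" unfolding convex_nn_def
  proof (intro allI impI SUP_least)
    fix x y t :: real and n assume h: "0 \<le> x" "0 \<le> y" "0 \<le> t \<and> t \<le> 1"
    have "ereal (g n (t*x + (1-t)*y)) \<le> ereal t * ereal (g n x) + ereal (1-t) * ereal (g n y)"
      using convex_on_nonnegD[OF sym_entropy_convex[OF g], of x y t n] h by simp
    also have "\<dots> \<le> ereal t * (SUP n. ereal (g n x)) + ereal (1-t) * (SUP n. ereal (g n y))"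
      using h by (intro add_mono ereal_mult_left_mono SUP_upper) auto
    finally show "ereal (g n (t*x + (1-t)*y)) \<le> \<dots>" .
  qed
  show "lsc_within {0..} (\<lambda>x. SUP n. ereal (g n x))"
    unfolding lsc_within_def le_Liminf_iff
  proof (intro ballI allI impI)
    fix x y assume x: "x \<in> {0..}" and "y < (SUP n. ereal (g n x))"
    then obtain n where n: "y < ereal (g n x)" by (auto simp: less_SUP_iff)
    have "(g n \<longlongrightarrow> g n x) (at x within {0..})"
      using sym_entropy_continuous[OF g] x by (simp add: continuous_on_def)
    hence "((\<lambda>z. ereal (g n z)) \<longlongrightarrow> ereal (g n x)) (at x within {0..})" by (rule tendsto_ereal)
    hence "\<forall>\<^sub>F z in at x within {0..}. y < ereal (g n z)" using n by (rule order_tendstoD)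
    thus "\<forall>\<^sub>F z in at x within {0..}. y < (SUP n. ereal (g n z))"
      by eventually_elim (auto simp: less_SUP_iff)
  qed
qed

lemma SUP_sym_entropy_symmetric:
  assumes "\<And>n. sym_entropy (g n)" "0 < s"
  shows "(SUP n. ereal (g n s)) = ereal s * (SUP n. ereal (g n (1/s)))"
proof -
  have "(SUP n. ereal (g n s)) = (SUP n. ereal s * ereal (g n (1/s)))"
    using sym_entropy_symmetric[OF assms(1,2)] by simp
  also have "\<dots> = ereal s * (SUP n. ereal (g n (1/s)))"
    using assms sym_entropy_nonneg[OF assms(1)] by (intro SUP_ereal_mult_left) auto
  finally show ?thesis .
qed

lemma compact_incseq_uniformly_gt:
  fixes \<phi> :: "nat \<Rightarrow> 'a::topological_space \<Rightarrow> 'b::linorder_topology"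
  assumes K: "compact K" and cont: "\<And>n. continuous_on K (\<phi> n)"
    and inc: "\<And>n x. x \<in> K \<Longrightarrow> \<phi> n x \<le> \<phi> (Suc n) x" and gt: "\<And>x. x \<in> K \<Longrightarrow> \<exists>n. c < \<phi> n x"
  obtains N where "\<And>x. x \<in> K \<Longrightarrow> c < \<phi> N x"
proof -
  have "\<forall>n. \<exists>A. open A \<and> A \<inter> K = \<phi> n -` {c<..} \<inter> K"
  proof
    fix n
    have "\<forall>B. open B \<longrightarrow> (\<exists>A. open A \<and> A \<inter> K = \<phi> n -` B \<inter> K)"
      using cont[of n] by (simp only: continuous_on_open_invariant)
    from this[rule_format, OF open_greaterThan]
    show "\<exists>A. open A \<and> A \<inter> K = \<phi> n -` {c<..} \<inter> K" .
  qed
  from choice[OF this] obtain U where U: "\<And>n. open (U n)" "\<And>n. U n \<inter> K = \<phi> n -` {c<..} \<inter> K"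
    by blast
  have cover: "K \<subseteq> (\<Union>n. U n)"
  proof
    fix x assume "x \<in> K"
    then obtain n where "c < \<phi> n x" using gt by blast
    thus "x \<in> (\<Union>n. U n)" using U(2)[of n] \<open>x \<in> K\<close> by blast
  qed
  obtain J where J: "finite J" "K \<subseteq> (\<Union>n\<in>J. U n)"
  proof (rule compactE_image[OF K, of UNIV U])
    show "K \<subseteq> (\<Union>n\<in>UNIV. U n)" by (rule cover)
  qed (use U(1) in auto)
  show ?thesis
  proof
    fix x assume x: "x \<in> K"
    then obtain n where n: "n \<in> J" "x \<in> U n" using J by blast
    hence "c < \<phi> n x" using U(2)[of n] x by auto
    also have "\<phi> n x \<le> \<phi> (Max J) x"
      using lift_Suc_mono_le[of "\<lambda>n. \<phi> n x", OF inc[OF x]] n J by simp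
    finally show "c < \<phi> (Max J) x" .
  qed
qed

lemma persp_real_sum_le_at_zero:
  assumes s: "0 \<le> s"
  obtains \<theta> where "0 < \<theta>"
    "\<And>g. sym_entropy g \<Longrightarrow> persp_real g \<theta> 1 + persp_real g \<theta> s \<le> persp_real g 0 1 + persp_real g 0 s"
proof
  define \<theta> where "\<theta> = (if s > 0 then min 1 s else 1)"
  show "0 < \<theta>" using s by (simp add: \<theta>_def)
  fix g assume g: "sym_entropy g"
  show "persp_real g \<theta> 1 + persp_real g \<theta> s \<le> persp_real g 0 1 + persp_real g 0 s"
  proof (cases "s = 0")
    case True
    thus ?thesis using sym_entropy_le_chord[OF g, of \<theta>] by (simp add: \<theta>_def persp_real_def algebra_simps)
  next
    case False
    hence "g (\<theta>/s) \<le> g 0" using sym_entropy_antimono[OF g, of 0 "\<theta>/s"] s by (simp add: \<theta>_def)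
    moreover have "g \<theta> \<le> g 0" using sym_entropy_antimono[OF g, of 0 \<theta>] s by (simp add: \<theta>_def)
    ultimately show ?thesis using False s by (simp add: persp_real_def add_mono mult_left_mono)
  qed
qed

lemma persp_sum_SUP_sym_entropy:
  assumes g: "\<And>n. sym_entropy (g n)" and inc: "\<And>n x. 0 \<le> x \<Longrightarrow> g n x \<le> g (Suc n) x"
    and "0 \<le> \<theta>" "0 \<le> r1" "0 \<le> r2"
  shows "persp (\<lambda>x. SUP n. ereal (g n x)) \<theta> r1 + persp (\<lambda>x. SUP n. ereal (g n x)) \<theta> r2
    = (SUP n. ereal (persp_real (g n) \<theta> r1 + persp_real (g n) \<theta> r2))"
proof -
  have incs: "incseq (\<lambda>n. ereal (persp_real (g n) \<theta> r))" if "0 \<le> r" for r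
    by (rule incseq_SucI) (use assms that in \<open>auto intro!: persp_real_mono inc\<close>)
  show ?thesis
    unfolding persp_SUP_sym_entropy[OF g refl assms(3,4)] persp_SUP_sym_entropy[OF g refl assms(3,5)]
      plus_ereal.simps(1)[symmetric]
    by (rule SUP_ereal_add_pos[symmetric]) (use assms incs in \<open>auto intro!: persp_real_nonneg g\<close>)
qed

text \<open>The infimum over \<open>\<theta>\<close> commutes with the increasing supremum. Large \<open>\<theta>\<close> are excluded by
  linear growth, \<open>\<theta> = 0\<close> is dominated by a small positive \<open>\<theta>\<close>, and on the remaining compact
  interval Dini's argument applies.\<close>
lemma Htilde_SUP_le:
  assumes g: "\<And>n. sym_entropy (g n)" and inc: "\<And>n x. 0 \<le> x \<Longrightarrow> g n x \<le> g (Suc n) x"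
    and pos: "0 < g 0 2" and s: "0 \<le> s"
  shows "Htilde (\<lambda>x. SUP n. ereal (g n x)) (1, s) \<le> (SUP n. ereal (marginal_persp (g n) 1 s))"
proof (rule ccontr)
  define Phi where "Phi = (\<lambda>n \<theta>. persp_real (g n) \<theta> 1 + persp_real (g n) \<theta> s)"
  assume "\<not> ?thesis"
  then obtain c where c: "(SUP n. ereal (marginal_persp (g n) 1 s)) < ereal c"
    "ereal c < Htilde (\<lambda>x. SUP n. ereal (g n x)) (1, s)"
    using ereal_dense2 not_le by metis
  have Phi_inc: "Phi n \<theta> \<le> Phi (Suc n) \<theta>" if "0 \<le> \<theta>" for n \<theta>
    unfolding Phi_def using that s by (intro add_mono persp_real_mono inc) auto
  have big: "\<exists>n. c < Phi n \<theta>" if \<theta>: "0 < \<theta>" for \<theta>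
  proof -
    have "Htilde (\<lambda>x. SUP n. ereal (g n x)) (1, s)
        \<le> persp (\<lambda>x. SUP n. ereal (g n x)) \<theta> 1 + persp (\<lambda>x. SUP n. ereal (g n x)) \<theta> s"
      unfolding Htilde_def by (rule INF_lower2[where i=\<theta>]) (use \<theta> in auto)
    also have "\<dots> = (SUP n. ereal (Phi n \<theta>))"
      unfolding Phi_def using \<theta> s by (intro persp_sum_SUP_sym_entropy[of g, OF g inc]) auto
    finally have "ereal c < (SUP n. ereal (Phi n \<theta>))" using c(2) by simp
    thus ?thesis by (auto simp: less_SUP_iff)
  qed
  obtain \<theta>0 where \<theta>0: "0 < \<theta>0" "\<And>n. Phi n \<theta>0 \<le> Phi n 0"
    using persp_real_sum_le_at_zero[OF s] g unfolding Phi_def by metis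
  have cover: "\<exists>n. c < Phi n \<theta>" if "0 \<le> \<theta>" for \<theta>
    using big[of \<theta>] big[OF \<theta>0(1)] \<theta>0(2) that by (cases "\<theta> = 0") (auto intro: less_le_trans)
  obtain B where B: "\<And>\<theta>. B < \<theta> \<Longrightarrow> c \<le> Phi 0 \<theta>"
    using persp_real_sum_large[OF g pos, of c] s unfolding Phi_def by metis
  obtain N where N: "\<And>\<theta>. \<theta> \<in> {0..B} \<Longrightarrow> c < Phi N \<theta>"
  proof (rule compact_incseq_uniformly_gt[of "{0..B}" Phi c])
    show "continuous_on {0..B} (Phi n)" for n
      unfolding Phi_def using s
      by (intro continuous_intros continuous_on_subset[OF continuous_on_persp_real_fst[OF g]]) auto
  qed (use Phi_inc cover in auto)
  have "c \<le> marginal_persp (g N) 1 s"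
  proof (rule marginal_persp_greatest)
    fix \<theta> :: real assume \<theta>: "0 < \<theta>"
    show "c \<le> persp_real (g N) \<theta> 1 + persp_real (g N) \<theta> s"
    proof (cases "\<theta> \<le> B")
      case True thus ?thesis using N[of \<theta>] \<theta> by (simp add: Phi_def)
    next
      case False
      have "Phi 0 \<theta> \<le> Phi N \<theta>" using lift_Suc_mono_le[of "\<lambda>n. Phi n \<theta>" 0 N] Phi_inc \<theta> by simp
      thus ?thesis using B[of \<theta>] False by (simp add: Phi_def)
    qed
  qed
  hence "ereal c \<le> (SUP n. ereal (marginal_persp (g n) 1 s))" by (intro SUP_upper2[where i=N]) auto
  thus False using c(1) by simp
qed

lemma HF_mono:
  assumes "\<And>\<theta> r. 0 < \<theta> \<Longrightarrow> 0 \<le> r \<Longrightarrow> persp F \<theta> r \<le> persp F' \<theta> r"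
  shows "HF F 1 s \<le> HF F' 1 s"
  unfolding HF_def
proof (rule lsc_envelope_mono)
  fix q :: "real \<times> real" assume "q \<in> {0..} \<times> {0..}"
  thus "Htilde F q \<le> Htilde F' q"
    unfolding Htilde_def using assms by (intro INF_mono bexI add_mono) auto
qed

lemma Ta_SUP_fixpoint:
  assumes g: "\<And>n. sym_entropy (g n)" "\<And>n. 0 < g n 2" and inc: "\<And>n x. 0 \<le> x \<Longrightarrow> g n x \<le> g (Suc n) x"
    and rec: "\<And>n. g (Suc n) = Ta_real a (g n)" and s: "0 \<le> s"
  shows "Ta a (\<lambda>x. SUP n. ereal (g n x)) s = (SUP n. ereal (g n s))"
proof (rule antisym)
  define k where "k = 2 powr (1/a - 1)"
  have "HF (\<lambda>x. SUP n. ereal (g n x)) 1 s \<le> Htilde (\<lambda>x. SUP n. ereal (g n x)) (1, s)"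
    unfolding HF_def using s by (intro lsc_envelope_le) auto
  also have "\<dots> \<le> (SUP n. ereal (marginal_persp (g n) 1 s))"
    by (rule Htilde_SUP_le[OF g(1) inc g(2)[of 0] s])
  finally have "Ta a (\<lambda>x. SUP n. ereal (g n x)) s \<le> ereal k * (SUP n. ereal (marginal_persp (g n) 1 s))"
    unfolding Ta_def k_def by (rule ereal_mult_left_mono) simp
  also have "\<dots> = (SUP n. ereal k * ereal (marginal_persp (g n) 1 s))"
    using s marginal_persp_nonneg[OF g(1)] by (intro SUP_ereal_mult_left[symmetric]) (auto simp: k_def)
  also have "\<dots> = (SUP n. ereal (g (Suc n) s))" by (simp add: rec Ta_real_def k_def)
  also have "\<dots> \<le> (SUP n. ereal (g n s))" by (intro SUP_mono) auto
  finally show "Ta a (\<lambda>x. SUP n. ereal (g n x)) s \<le> (SUP n. ereal (g n s))" .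
next
  have "ereal (g (Suc n) s) \<le> Ta a (\<lambda>x. SUP n. ereal (g n x)) s" for n
  proof -
    have "ereal (g (Suc n) s) = Ta a (\<lambda>x. ereal (g n x)) s"
      using Ta_eq_Ta_real[OF g(1,2) _ s] by (simp add: rec)
    also have "\<dots> \<le> Ta a (\<lambda>x. SUP n. ereal (g n x)) s"
      unfolding Ta_def
    proof (intro ereal_mult_left_mono HF_mono)
      fix \<theta> r :: real assume "0 < \<theta>" "0 \<le> r"
      hence "persp (\<lambda>x. ereal (g n x)) \<theta> r = ereal (persp_real (g n) \<theta> r)"
        "persp (\<lambda>x. SUP n. ereal (g n x)) \<theta> r = (SUP n. ereal (persp_real (g n) \<theta> r))"
        using persp_eq_persp_real[OF g(1) refl] persp_SUP_sym_entropy[where g=g, OF g(1) refl] by auto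
      thus "persp (\<lambda>x. ereal (g n x)) \<theta> r \<le> persp (\<lambda>x. SUP n. ereal (g n x)) \<theta> r"
        by (auto intro: SUP_upper)
    qed simp
    finally show ?thesis .
  qed
  hence "(SUP n. ereal (g (Suc n) s)) \<le> Ta a (\<lambda>x. SUP n. ereal (g n x)) s" by (rule SUP_least)
  moreover have "(SUP n. ereal (g n s)) \<le> (SUP n. ereal (g (Suc n) s))"
    using inc s by (intro SUP_mono) auto
  ultimately show "(SUP n. ereal (g n s)) \<le> Ta a (\<lambda>x. SUP n. ereal (g n x)) s" by simp
qed

lemma powr_add_le_of_add_le:
  fixes U V W a :: real
  assumes "0 \<le> U" "0 \<le> V" "0 \<le> W" "0 < a" "a \<le> 1" "U + V \<le> W / 2 powr (1/a - 1)"
  shows "U powr a + V powr a \<le> W powr a"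
proof -
  have "(U + V)/2 \<le> (W / 2 powr (1/a - 1))/2" using assms(6) by simp
  also have "\<dots> = W / 2 powr (1/a)" by (simp add: powr_diff)
  finally have "(U + V)/2 \<le> W / 2 powr (1/a)" .
  have "U powr a + V powr a \<le> 2 * ((U + V)/2) powr a" by (rule powr_add_le_two_mean) (use assms in auto)
  also have "\<dots> \<le> 2 * (W / 2 powr (1/a)) powr a"
    using assms \<open>(U + V)/2 \<le> W / 2 powr (1/a)\<close> by (intro mult_left_mono powr_mono2) auto
  also have "\<dots> = W powr a" using assms by (simp add: powr_divide powr_powr)
  finally show ?thesis .
qed

definition split_ratio :: "real \<Rightarrow> real" where
  "split_ratio a = (1 - 2 powr (a - 1))/2"

lemma split_ratio_bounds: "a < 1 \<Longrightarrow> 0 < split_ratio a \<and> split_ratio a < 1"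
proof -
  assume "a < 1"
  hence "2 powr (a - 1) < 1" using powr_less_mono[of "a - 1" 0 2] by simp
  moreover have "0 < 1 + 2 powr (a - 1)" by (intro add_pos_pos) simp_all
  ultimately show ?thesis by (simp add: split_ratio_def field_simps)
qed

lemma powr_balance:
  fixes x y W a :: real
  assumes a: "0 < a" "a < 1" and xy: "0 \<le> x" "0 \<le> y" "x + y = W powr a" and W: "0 \<le> W"
    and y: "y powr (1/a) \<le> W / 2 powr (1/a - 1)"
  shows "split_ratio a * W powr a \<le> x"
proof -
  have "y = (y powr (1/a)) powr a" using xy a by (simp add: powr_powr)
  also have "\<dots> \<le> (W / 2 powr (1/a - 1)) powr a" using y a xy by (intro powr_mono2) auto
  also have "\<dots> = W powr a / 2 powr ((1/a - 1) * a)" using W by (simp add: powr_divide powr_powr)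
  also have "(1/a - 1) * a = 1 - a" using a by (simp add: field_simps)
  also have "W powr a / 2 powr (1 - a) = 2 powr (a - 1) * W powr a" by (simp add: powr_diff)
  finally have "y \<le> 2 powr (a - 1) * W powr a" .
  moreover have "2 powr (a - 1) \<le> 2 powr 0" using a by (intro powr_mono) auto
  hence "(1 - 2 powr (a - 1))/2 * W powr a \<le> (1 - 2 powr (a - 1)) * W powr a"
    by (intro mult_right_mono) auto
  ultimately show ?thesis using xy by (simp add: algebra_simps split_ratio_def)
qed

text \<open>Rigidity of fixed points: \<open>\<rho> = persp_real g ^ a\<close> below is a metric in which every interval
  \<open>[z, w]\<close> that is aligned with 0 (\<open>\<rho> z w = \<rho> 0 w - \<rho> 0 z\<close>) contains a point splitting it in
  proportions bounded away from 0 and 1. Iterating, \<open>\<rho> x y = \<rho> 0 y - \<rho> 0 x\<close> for all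
  \<open>x \<le> y\<close>, and \<open>\<rho> 0 x = g 0 ^ a * x ^ a\<close> determines \<open>g\<close>.\<close>
context
  fixes g :: "real \<Rightarrow> real" and a :: real
  assumes g: "sym_entropy g" and a: "0 < a" "a < 1"
    and metric: "metric_nn (\<lambda>x y. persp_real g x y powr a)"
    and fixpoint: "\<And>s. 0 \<le> s \<Longrightarrow> Ta_real a g s = g s"
begin

abbreviation \<rho> :: "real \<Rightarrow> real \<Rightarrow> real" where
  "\<rho> x y \<equiv> persp_real g x y powr a"

lemma rho_triangle: "0 \<le> x \<Longrightarrow> 0 \<le> y \<Longrightarrow> 0 \<le> z \<Longrightarrow> \<rho> x z \<le> \<rho> x y + \<rho> y z"
  using metric unfolding metric_nn_def by blast

lemma rho_commute: "0 \<le> x \<Longrightarrow> 0 \<le> y \<Longrightarrow> \<rho> x y = \<rho> y x"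
  using metric unfolding metric_nn_def by blast

lemma sym_entropy_pos: "0 \<le> x \<Longrightarrow> x \<noteq> 1 \<Longrightarrow> 0 < g x"
  by (rule sym_entropy_pos_of_metric[OF g metric])

lemma rho_zero_left: "0 \<le> x \<Longrightarrow> \<rho> 0 x = g 0 powr a * x powr a"
  by (cases "x = 0") (auto simp: persp_real_def powr_mult mult.commute)

lemma rho_zero_left_less: "0 \<le> x \<Longrightarrow> x < y \<Longrightarrow> \<rho> 0 x < \<rho> 0 y"
  using rho_zero_left[of x] rho_zero_left[of y] sym_entropy_pos[of 0] a powr_less_mono2[of a x y]
  by simp

lemma rho_zero_left_le_iff: "0 \<le> x \<Longrightarrow> 0 \<le> y \<Longrightarrow> \<rho> 0 x \<le> \<rho> 0 y \<longleftrightarrow> x \<le> y"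
  using rho_zero_left_less[of x y] rho_zero_left_less[of y x] by (cases x y rule: linorder_cases) auto

lemma rho_antimono_left:
  assumes "0 \<le> z" "z \<le> x" "x \<le> y"
  shows "\<rho> x y \<le> \<rho> z y"
proof (cases "y = 0")
  case False
  hence y: "0 < y" using assms by simp
  have "g (x/y) \<le> g (z/y)"
    using sym_entropy_antimono[OF g, of "z/y" "x/y"] assms y by (simp add: divide_right_mono divide_le_eq_1)
  hence "persp_real g x y \<le> persp_real g z y" using y by (simp add: persp_real_def)
  thus ?thesis using persp_real_nonneg[OF g, of x y] assms by (intro powr_mono2) (use a in auto)
next
  case True
  hence "x = 0" "z = 0" using assms by auto
  thus ?thesis using True by simp
qed

lemma persp_real_eq_scaled_marginal_persp:
  assumes "0 \<le> z" "0 < w"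
  shows "persp_real g z w = 2 powr (1/a - 1) * marginal_persp g z w"
proof -
  have "persp_real g z w = w * persp_real g (z/w) 1" using persp_real_scale[OF assms(2), of g "z/w" 1] assms by simp
  also have "\<dots> = w * Ta_real a g (z/w)" using fixpoint[of "z/w"] assms by (simp add: persp_real_right_one)
  also have "\<dots> = 2 powr (1/a - 1) * (w * marginal_persp g (z/w) 1)"
    by (simp add: Ta_real_def marginal_persp_commute)
  also have "w * marginal_persp g (z/w) 1 = marginal_persp g z w"
    using marginal_persp_scale[OF g, of "z/w" 1 w] assms by simp
  finally show ?thesis .
qed

lemma marginal_persp_attained:
  assumes "0 \<le> z" "0 < w"
  obtains \<theta> where "0 \<le> \<theta>" "persp_real g \<theta> z + persp_real g \<theta> w \<le> marginal_persp g z w"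
proof -
  define Psi where "Psi = (\<lambda>\<theta>. persp_real g \<theta> z + persp_real g \<theta> w)"
  have g2: "0 < g 2" using sym_entropy_pos by simp
  define B where "B = max 1 (max (2*w) (w + Psi 1 / g 2))"
  have "continuous_on {0..B} Psi" unfolding Psi_def
    using assms by (intro continuous_intros continuous_on_subset[OF continuous_on_persp_real_fst[OF g]]) auto
  hence "\<exists>\<theta>\<in>{0..B}. \<forall>t\<in>{0..B}. Psi \<theta> \<le> Psi t"
    using assms by (intro continuous_attains_inf) (auto simp: B_def)
  then obtain \<theta> where \<theta>: "\<theta> \<in> {0..B}" "\<And>t. t \<in> {0..B} \<Longrightarrow> Psi \<theta> \<le> Psi t" by blast
  have "Psi \<theta> \<le> Psi t" if t: "0 < t" for t
  proof (cases "t \<le> B")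
    case True thus ?thesis using \<theta> t by auto
  next
    case False
    have "Psi \<theta> \<le> Psi 1" using \<theta> assms by (auto simp: B_def)
    also have "\<dots> \<le> (t - w) * g 2"
    proof -
      have "Psi 1 / g 2 \<le> t - w" using False by (simp add: B_def)
      thus ?thesis using g2 by (simp add: pos_divide_le_eq)
    qed
    also have "\<dots> = w * ((t/w - 1) * g 2)" using assms by (simp add: field_simps)
    also have "\<dots> \<le> w * g (t/w)"
      using sym_entropy_linear_growth[OF g, of "t/w"] False assms by (intro mult_left_mono) (auto simp: B_def le_divide_eq)
    also have "\<dots> \<le> Psi t"
      using persp_real_nonneg[OF g, of t z] t assms by (simp add: Psi_def persp_real_def)
    finally show ?thesis .
  qed
  hence "Psi \<theta> \<le> marginal_persp g z w" by (intro marginal_persp_greatest) (simp add: Psi_def)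
  thus ?thesis using that[of \<theta>] \<theta>(1) by (simp add: Psi_def)
qed

text \<open>Take \<open>\<theta>\<close> attaining \<open>marginal_persp g z w\<close>. Since \<open>g\<close> is a fixed point, the sum
  \<open>persp_real g \<theta> z + persp_real g \<theta> w\<close> is only \<open>2^(1 - 1/a)\<close> times \<open>persp_real g z w\<close>, and concavity
  of \<open>u \<mapsto> u^a\<close> turns this into equality in the triangle inequality through \<open>\<theta>\<close>, with both parts
  comparable to the whole.\<close>
lemma rho_split:
  assumes z: "0 \<le> z" "z < w" and aligned: "\<rho> z w = \<rho> 0 w - \<rho> 0 z"
  obtains \<theta> where "z \<le> \<theta>" "\<theta> \<le> w" "\<rho> z \<theta> = \<rho> 0 \<theta> - \<rho> 0 z" "\<rho> \<theta> w = \<rho> 0 w - \<rho> 0 \<theta>"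
    "split_ratio a * (\<rho> 0 w - \<rho> 0 z) \<le> \<rho> 0 \<theta> - \<rho> 0 z"
    "split_ratio a * (\<rho> 0 w - \<rho> 0 z) \<le> \<rho> 0 w - \<rho> 0 \<theta>"
proof -
  have w: "0 < w" using z by simp
  obtain \<theta> where \<theta>: "0 \<le> \<theta>" "persp_real g \<theta> z + persp_real g \<theta> w \<le> marginal_persp g z w"
    using marginal_persp_attained[OF z(1) w] by blast
  define U where "U = persp_real g \<theta> z"
  define V where "V = persp_real g \<theta> w"
  define W where "W = persp_real g z w"
  have UV: "0 \<le> U" "0 \<le> V" "0 \<le> W" using persp_real_nonneg[OF g] \<theta> z by (auto simp: U_def V_def W_def)
  have UVW: "U + V \<le> W / 2 powr (1/a - 1)"
    using \<theta>(2) persp_real_eq_scaled_marginal_persp[OF z(1) w] by (simp add: U_def V_def W_def field_simps)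
  have U: "\<rho> z \<theta> = U powr a" using rho_commute[of z \<theta>] \<theta> z by (simp add: U_def)
  have V: "\<rho> \<theta> w = V powr a" by (simp add: V_def)
  have W: "\<rho> 0 w - \<rho> 0 z = W powr a" using aligned by (simp add: W_def)
  have "U powr a + V powr a \<le> W powr a" by (rule powr_add_le_of_add_le) (use UV UVW a in auto)
  moreover have "W powr a \<le> U powr a + V powr a" using rho_triangle[of z \<theta> w] \<theta> z U V by (simp add: W_def)
  ultimately have sum: "U powr a + V powr a = W powr a" by simp
  have "\<rho> 0 \<theta> \<le> \<rho> 0 z + \<rho> z \<theta>" "\<rho> 0 w \<le> \<rho> 0 \<theta> + \<rho> \<theta> w"
    using rho_triangle \<theta> z by auto
  hence eq: "\<rho> z \<theta> = \<rho> 0 \<theta> - \<rho> 0 z" "\<rho> \<theta> w = \<rho> 0 w - \<rho> 0 \<theta>" using U V W sum by linarith+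
  have "\<rho> 0 z \<le> \<rho> 0 \<theta>" "\<rho> 0 \<theta> \<le> \<rho> 0 w" using eq U V powr_ge_zero[of U a] powr_ge_zero[of V a] by linarith+
  hence "z \<le> \<theta>" "\<theta> \<le> w" using rho_zero_left_le_iff \<theta> z by auto
  moreover have "(U powr a) powr (1/a) \<le> W / 2 powr (1/a - 1)" "(V powr a) powr (1/a) \<le> W / 2 powr (1/a - 1)"
    using UV UVW a by (simp_all add: powr_powr)
  hence "split_ratio a * W powr a \<le> U powr a" "split_ratio a * W powr a \<le> V powr a"
    using UV sum powr_balance[OF a, of "U powr a" "V powr a" W] powr_balance[OF a, of "V powr a" "U powr a" W]
    by (simp_all add: add.commute)
  ultimately show ?thesis using that eq U V W by simp
qed

lemma rho_aligned_approx:
  assumes "0 \<le> z" "z \<le> x" "x \<le> w" "\<rho> z w = \<rho> 0 w - \<rho> 0 z"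
  shows "\<exists>z'. z \<le> z' \<and> z' \<le> x \<and> \<rho> z' w = \<rho> 0 w - \<rho> 0 z' \<and>
           \<rho> 0 x - \<rho> 0 z' \<le> (1 - split_ratio a) ^ n * (\<rho> 0 w - \<rho> 0 z)"
  using assms
proof (induction n arbitrary: z x w)
  case 0
  have "\<rho> 0 x \<le> \<rho> 0 w" using 0 rho_zero_left_le_iff by simp
  thus ?case using 0 by (intro exI[of _ z]) auto
next
  case (Suc n)
  let ?r = "1 - split_ratio a"
  have r: "0 \<le> ?r ^ n" "0 \<le> ?r" using split_ratio_bounds[OF a(2)] by auto
  show ?case
  proof (cases "z = w")
    case True thus ?thesis using Suc.prems by (intro exI[of _ z]) auto
  next
    case False
    then obtain \<theta> where \<theta>: "z \<le> \<theta>" "\<theta> \<le> w" "\<rho> z \<theta> = \<rho> 0 \<theta> - \<rho> 0 z" "\<rho> \<theta> w = \<rho> 0 w - \<rho> 0 \<theta>"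
      "\<rho> 0 w - \<rho> 0 \<theta> \<le> ?r * (\<rho> 0 w - \<rho> 0 z)" "\<rho> 0 \<theta> - \<rho> 0 z \<le> ?r * (\<rho> 0 w - \<rho> 0 z)"
      using rho_split[of z w] Suc.prems by (auto simp: algebra_simps)
    show ?thesis
    proof (cases "\<theta> \<le> x")
      case True
      then obtain z' where z': "\<theta> \<le> z'" "z' \<le> x" "\<rho> z' w = \<rho> 0 w - \<rho> 0 z'"
        "\<rho> 0 x - \<rho> 0 z' \<le> ?r ^ n * (\<rho> 0 w - \<rho> 0 \<theta>)"
        using Suc.IH[of \<theta> x w] Suc.prems \<theta> by auto
      have "?r ^ n * (\<rho> 0 w - \<rho> 0 \<theta>) \<le> ?r ^ n * (?r * (\<rho> 0 w - \<rho> 0 z))"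
        using \<theta>(5) r(1) by (rule mult_left_mono)
      also have "\<dots> = ?r ^ Suc n * (\<rho> 0 w - \<rho> 0 z)" by (simp add: algebra_simps)
      finally show ?thesis using z' \<theta>(1) by (intro exI[of _ z']) auto
    next
      case False
      then obtain z' where z': "z \<le> z'" "z' \<le> x" "\<rho> z' \<theta> = \<rho> 0 \<theta> - \<rho> 0 z'"
        "\<rho> 0 x - \<rho> 0 z' \<le> ?r ^ n * (\<rho> 0 \<theta> - \<rho> 0 z)"
        using Suc.IH[of z x \<theta>] Suc.prems \<theta> by auto
      have "?r ^ n * (\<rho> 0 \<theta> - \<rho> 0 z) \<le> ?r ^ n * (?r * (\<rho> 0 w - \<rho> 0 z))"
        using \<theta>(6) r(1) by (rule mult_left_mono)
      also have "\<dots> = ?r ^ Suc n * (\<rho> 0 w - \<rho> 0 z)" by (simp add: algebra_simps)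
      moreover have "\<rho> z' w \<le> \<rho> z' \<theta> + \<rho> \<theta> w" "\<rho> 0 w \<le> \<rho> 0 z' + \<rho> z' w"
        using rho_triangle[of z' \<theta> w] rho_triangle[of 0 z' w] Suc.prems z' \<theta> by auto
      ultimately show ?thesis using z' \<theta> by (intro exI[of _ z']) auto
    qed
  qed
qed

lemma rho_additive:
  assumes "0 \<le> x" "x \<le> y"
  shows "\<rho> x y = \<rho> 0 y - \<rho> 0 x"
proof (rule antisym)
  let ?r = "1 - split_ratio a"
  have r: "0 \<le> ?r" "?r < 1" using split_ratio_bounds[OF a(2)] by auto
  have bound: "\<rho> x y - (\<rho> 0 y - \<rho> 0 x) \<le> ?r ^ n * \<rho> 0 y" for n
  proof -
    obtain z' where z': "0 \<le> z'" "z' \<le> x" "\<rho> z' y = \<rho> 0 y - \<rho> 0 z'"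
      "\<rho> 0 x - \<rho> 0 z' \<le> ?r ^ n * (\<rho> 0 y - \<rho> 0 0)"
      using rho_aligned_approx[of 0 x y n] assms persp_real_diag[OF g, of 0] by auto
    moreover have "\<rho> x y \<le> \<rho> z' y" using z' assms by (intro rho_antimono_left) auto
    ultimately show ?thesis using persp_real_diag[OF g, of 0] by simp
  qed
  have "(\<lambda>n. ?r ^ n * \<rho> 0 y) \<longlonglongrightarrow> 0"
    using r by (intro tendsto_mult_left_zero LIMSEQ_power_zero) auto
  hence "\<rho> x y - (\<rho> 0 y - \<rho> 0 x) \<le> 0" by (rule LIMSEQ_le_const) (use bound in auto)
  thus "\<rho> x y \<le> \<rho> 0 y - \<rho> 0 x" by simp
  show "\<rho> 0 y - \<rho> 0 x \<le> \<rho> x y" using rho_triangle[of 0 x y] assms by simp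
qed

lemma fixpoint_eq_power_form:
  assumes s: "0 \<le> s"
  shows "g s = g 0 * \<bar>s powr a - 1\<bar> powr (1/a)"
proof -
  have "\<rho> 1 s = g 0 powr a * \<bar>s powr a - 1\<bar>"
  proof (cases "1 \<le> s")
    case True
    moreover have "1 \<le> s powr a" using True a by (simp add: ge_one_powr_ge_zero)
    ultimately show ?thesis
      using rho_additive[of 1 s] rho_zero_left[of s] rho_zero_left[of 1] by (simp add: algebra_simps)
  next
    case False
    moreover have "s powr a \<le> 1" using False s a by (intro powr_le1) auto
    ultimately show ?thesis
      using rho_commute[of 1 s] rho_additive[of s 1] rho_zero_left[of s] rho_zero_left[of 1] s
      by (simp add: algebra_simps)
  qed
  moreover have "g s = (\<rho> 1 s) powr (1/a)"
    using persp_real_left_one[OF g s] persp_real_nonneg[OF g, of 1 s] s a by (simp add: powr_powr)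
  moreover have "(g 0 powr a) powr (1/a) = g 0" using sym_entropy_pos[of 0] a by (simp add: powr_powr)
  ultimately show ?thesis by (simp add: powr_mult)
qed

end

lemma Gamma0s_symmetric:
  assumes "Gamma0s F"
  shows "\<forall>s>0. F s = ereal s * F (1/s)"
proof (intro allI impI)
  fix s :: real assume "0 < s"
  hence "F s = reverse_entropy F s" using assms by (simp add: Gamma0s_def less_imp_le)
  also have "\<dots> = ereal s * F (1/s)" using \<open>0 < s\<close> unfolding reverse_entropy_def by (rule if_P)
  finally show "F s = ereal s * F (1/s)" .
qed

lemma sym_entropy_of_persp_pow_metric:
  assumes "Gamma0 G" "\<forall>s>0. G s = ereal s * G (1/s)" "persp_pow_metric a G"
    and g: "\<And>x. g x = real_of_ereal (G x)"
  shows "sym_entropy g" "\<And>x. 0 \<le> x \<Longrightarrow> G x = ereal (g x)"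
    and "metric_nn (\<lambda>x y. persp_real g x y powr a)"
proof -
  have g_def: "g = (\<lambda>x. real_of_ereal (G x))" using g by auto
  note facts = sym_entropy_of_Gamma0[OF assms(1) persp_pow_metric_finite[OF assms(3)] assms(2)]
  show "sym_entropy g" unfolding g_def by (rule facts(1))
  show "\<And>x. 0 \<le> x \<Longrightarrow> G x = ereal (g x)" unfolding g_def by (rule facts(2))
  show "metric_nn (\<lambda>x y. persp_real g x y powr a)"
    unfolding g_def by (rule persp_pow_metric_real[OF assms(3) facts])
qed

lemma Gamma0_fixpoint_power_form:
  assumes a: "0 < a" "a < 1" and G: "Gamma0 G" "\<forall>s>0. G s = ereal s * G (1/s)"
    and fixpoint: "\<And>s. 0 \<le> s \<Longrightarrow> Ta a G s = G s" and metric: "persp_pow_metric a G"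
  shows "\<exists>c>0. \<forall>s\<ge>0. G s = ereal (c * \<bar>s powr a - 1\<bar> powr (1/a))"
proof -
  define g where "g x = real_of_ereal (G x)" for x
  note g = sym_entropy_of_persp_pow_metric[OF G metric g_def]
  have pos: "0 < g 2" "0 < g 0" using sym_entropy_pos_of_metric[OF g(1) g(3)] by auto
  have "Ta_real a g s = g s" if "0 \<le> s" for s
    using Ta_eq_Ta_real[OF g(1) pos(1) g(2) that] fixpoint[OF that] g(2)[OF that] by simp
  hence "G s = ereal (g 0 * \<bar>s powr a - 1\<bar> powr (1/a))" if "0 \<le> s" for s
    using g(2)[OF that] fixpoint_eq_power_form[OF g(1) a g(3) _ that] by simp
  thus ?thesis using pos(2) by blast
qed

theorem mainTheorem9:
  fixes a :: real and F :: "real \<Rightarrow> ereal"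
  assumes "0 < a" "a < 1"
    and "Gamma0s F"
    and "persp_pow_metric a F"
  shows "(\<forall>n. \<forall>s\<ge>0. (Ta a ^^ n) F s \<le> (Ta a ^^ Suc n) F s) \<and>
         (\<exists>Finf. Gamma0 Finf \<and>
            (\<forall>s\<ge>0. (\<lambda>n. (Ta a ^^ n) F s) \<longlonglongrightarrow> Finf s) \<and>
            (\<forall>s\<ge>0. Ta a Finf s = Finf s) \<and>
            (persp_pow_metric a Finf \<longrightarrow>
               (\<exists>c>0. \<forall>s\<ge>0. Finf s = ereal (c * \<bar>s powr a - 1\<bar> powr (1 / a)))))"
proof -
  have F: "Gamma0 F" "\<forall>s>0. F s = ereal s * F (1/s)"
    using assms(3) Gamma0s_symmetric[OF assms(3)] by (simp_all only: Gamma0s_def)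
  define g where "g x = real_of_ereal (F x)" for x
  note g = sym_entropy_of_persp_pow_metric[OF F assms(4) g_def]
  define gs where "gs n = (Ta_real a ^^ n) g" for n
  have gs: "sym_entropy (gs n)" "0 < gs n 2" "0 \<le> x \<Longrightarrow> gs n x \<le> gs (Suc n) x" for n x
    using Ta_real_iterates[OF g(1) assms(1,2) g(3)] by (auto simp: gs_def)
  have iterates: "(Ta a ^^ n) F x = ereal (gs n x)" if "0 \<le> x" for n x
    using Ta_iterates_eq_Ta_real_iterates[OF gs(1,2)[unfolded gs_def] g(2) that] by (simp add: gs_def)
  define Finf where "Finf x = (SUP n. ereal (gs n x))" for x
  have Finf: "Gamma0 Finf" "\<forall>s>0. Finf s = ereal s * Finf (1/s)"
    unfolding Finf_def[abs_def]
    by (rule Gamma0_SUP_sym_entropy[of gs, OF gs(1)], intro allI impI SUP_sym_entropy_symmetric[of gs, OF gs(1)])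
  have fixpoint: "Ta a Finf s = Finf s" if "0 \<le> s" for s
    using Ta_SUP_fixpoint[of gs, OF gs(1,2) gs(3) _ that] by (simp add: Finf_def[abs_def] gs_def)
  have "(\<lambda>n. (Ta a ^^ n) F s) \<longlonglongrightarrow> Finf s" if "0 \<le> s" for s
    using LIMSEQ_SUP[of "\<lambda>n. ereal (gs n s)"] gs(3) that by (simp add: iterates Finf_def incseq_SucI)
  moreover have "(Ta a ^^ n) F s \<le> (Ta a ^^ Suc n) F s" if "0 \<le> s" for n s
    unfolding iterates[OF that] using gs(3)[OF that] by simp
  ultimately show ?thesis
    using Finf(1) fixpoint Gamma0_fixpoint_power_form[OF assms(1,2) Finf fixpoint] by blast
qed

end
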